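(* Let $h\in(0,1)$ and $K\in C^h([0,T])$, let $K_n$ be the Bernstein polynomial approximation of $K$ of order $n$, and let $u\in L^2_a$. Let $X^u$ and $X^u_n$ be the solutions of $$X^u(t)=X(0)+\int_0^tK(t-s)(\alpha u(s)-\beta X^u(s))ds+\sigma\int_0^tK(t-s)dW(s),$$ $$X^u_n(t)=X(0)+\int_0^tK_n(t-s)(\alpha u(s)-\beta X^u_n(s))ds+\sigma\int_0^tK_n(t-s)dW(s),\quad t\in[0,T].$$ Then there exists $C>0$, not depending on $n$ or $u$, such that for any $u\in L^2_a$, $$\sup_{t\in[0,T]}\mathbb E\big[|X^u(t)-X^u_n(t)|^2\big]\le C(1+\|u\|_2^2)n^{-h}.$$
   Context: Fix $T>0$ and constants $\alpha,\beta,\sigma>0$, $X(0)\in\mathbb R$. $W$ is a standard one-dimensional Brownian motion; $L^2_a$ is the space of real-valued square-integrable processes on $\Omega\times[0,T]$ adapted to the filtration generated by $W$; $\|\cdot\|_2$ is the $L^2(\Omega\times[0,T])$ norm. $C^h([0,T])$ is the set of $h$-Hölder continuous functions on $[0,T]$. The Bernstein polynomial approximation of order $n$ of $K$ is $K_n(t)=\frac{1}{T^n}\sum_{k=0}^nK\big(\frac{Tk}{n}\big)\binom nk t^k(T-t)^{n-k}$, $t\in[0,T]$. *)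

theory Defs
  imports "HOL-Probability.Probability"
begin

definition holder_on :: "real \<Rightarrow> real set \<Rightarrow> (real \<Rightarrow> real) \<Rightarrow> bool" where
  "holder_on h S f \<longleftrightarrow> (\<exists>L. \<forall>x\<in>S. \<forall>y\<in>S. \<bar>f x - f y\<bar> \<le> L * \<bar>x - y\<bar> powr h)"

definition bernstein :: "real \<Rightarrow> (real \<Rightarrow> real) \<Rightarrow> nat \<Rightarrow> real \<Rightarrow> real" where
  "bernstein T K n t = (1 / T ^ n) *
     (\<Sum>k\<le>n. K (T * real k / real n) * real (n choose k) * t ^ k * (T - t) ^ (n - k))"

definition std_brownian_motion :: "'a measure \<Rightarrow> (real \<Rightarrow> 'a \<Rightarrow> real) \<Rightarrow> bool" where
  "std_brownian_motion M W \<longleftrightarrow>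
     prob_space M \<and>
     (\<forall>t. W t \<in> borel_measurable M) \<and>
     (AE \<omega> in M. W 0 \<omega> = 0) \<and>
     (AE \<omega> in M. continuous_on {0..} (\<lambda>t. W t \<omega>)) \<and>
     (\<forall>s t. 0 \<le> s \<and> s < t \<longrightarrow>
        distributed M lborel (\<lambda>\<omega>. W t \<omega> - W s \<omega>) (normal_density 0 (sqrt (t - s)))) \<and>
     (\<forall>ts :: nat \<Rightarrow> real. \<forall>k. (0 \<le> ts 0 \<and> (\<forall>i<k. ts i < ts (Suc i))) \<longrightarrow>
        prob_space.indep_vars M (\<lambda>_. borel) (\<lambda>i \<omega>. W (ts (Suc i)) \<omega> - W (ts i) \<omega>) {..<k})"

definition bm_filtration :: "'a measure \<Rightarrow> (real \<Rightarrow> 'a \<Rightarrow> real) \<Rightarrow> real \<Rightarrow> 'a measure" where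
  "bm_filtration M W t = sigma (space M)
     ({W s -` B \<inter> space M | s B. 0 \<le> s \<and> s \<le> t \<and> B \<in> sets borel} \<union> null_sets M)"

abbreviation prod_T :: "'a measure \<Rightarrow> real \<Rightarrow> ('a \<times> real) measure" where
  "prod_T M T \<equiv> M \<Otimes>\<^sub>M restrict_space lborel {0..T}"

definition L2a :: "'a measure \<Rightarrow> (real \<Rightarrow> 'a \<Rightarrow> real) \<Rightarrow> real \<Rightarrow> (real \<Rightarrow> 'a \<Rightarrow> real) set" where
  "L2a M W T = {u. (\<lambda>(\<omega>, t). u t \<omega>) \<in> borel_measurable (prod_T M T) \<and>
                   integrable (prod_T M T) (\<lambda>(\<omega>, t). (u t \<omega>)\<^sup>2) \<and>
                   (\<forall>t\<in>{0..T}. u t \<in> borel_measurable (bm_filtration M W t))}"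

definition L2norm_sq :: "'a measure \<Rightarrow> real \<Rightarrow> (real \<Rightarrow> 'a \<Rightarrow> real) \<Rightarrow> real" where
  "L2norm_sq M T u = (\<integral>(\<omega>, t). (u t \<omega>)\<^sup>2 \<partial>prod_T M T)"

text \<open>Z is (a version of) the Wiener integral \<integral>_0^t g(s) dW(s) of a deterministic
  continuous integrand g: the L^2(M)-limit of the left-point Riemann sums over
  uniform partitions of [0,t].\<close>
definition wiener_integral :: "'a measure \<Rightarrow> (real \<Rightarrow> 'a \<Rightarrow> real) \<Rightarrow> (real \<Rightarrow> real) \<Rightarrow> real \<Rightarrow> ('a \<Rightarrow> real) \<Rightarrow> bool" where
  "wiener_integral M W g t Z \<longleftrightarrow>
     Z \<in> borel_measurable M \<and> integrable M (\<lambda>\<omega>. (Z \<omega>)\<^sup>2) \<and>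
     ((\<lambda>m. \<integral>\<^sup>+\<omega>. ennreal ((Z \<omega> - (\<Sum>i<m. g (t * real i / real m) *
           (W (t * real (Suc i) / real m) \<omega> - W (t * real i / real m) \<omega>)))\<^sup>2) \<partial>M)
        \<longlonglongrightarrow> 0)"

definition volterra_solution ::
  "'a measure \<Rightarrow> (real \<Rightarrow> 'a \<Rightarrow> real) \<Rightarrow> real \<Rightarrow> real \<Rightarrow> real \<Rightarrow> real \<Rightarrow> real \<Rightarrow>
   (real \<Rightarrow> real) \<Rightarrow> (real \<Rightarrow> 'a \<Rightarrow> real) \<Rightarrow> (real \<Rightarrow> 'a \<Rightarrow> real) \<Rightarrow> bool" where
  "volterra_solution M W T X0 \<alpha> \<beta> \<sigma> k u X \<longleftrightarrow>
     (\<lambda>(\<omega>, t). X t \<omega>) \<in> borel_measurable (prod_T M T) \<and>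
     (AE \<omega> in M. set_integrable lborel {0..T} (\<lambda>s. X s \<omega>)) \<and>
     (\<forall>t\<in>{0..T}. \<exists>Z. wiener_integral M W (\<lambda>s. k (t - s)) t Z \<and>
        (AE \<omega> in M. X t \<omega> = X0 + (\<integral>s\<in>{0..t}. k (t - s) * (\<alpha> * u s \<omega> - \<beta> * X s \<omega>) \<partial>lborel)
                              + \<sigma> * Z \<omega>))"

end

theory Submission
  imports Defs
begin

(*
  Subtracting the two equations, the difference D = X - X_n satisfies, path by path,
    |D(t)| <= a(t) + beta B int_0^t |D(s)| ds,
  where B bounds both kernels and a(t) collects the kernel error d = sup |K - K_n| times the
  L^1 norms of the paths of u and X, plus the difference of the two stochastic integrals.
  Gronwall's inequality together with Cauchy-Schwarz turns this into a bound of E D(t)^2 by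
  sup_s E a(s)^2, and the isometry for Riemann sums of Brownian increments gives
  E a(s)^2 <= const * d^2 * (1 + ||u||_2^2 + sup_s E X(s)^2).  The same estimate, applied to X
  and to the constant solution X(0) of the equation with kernel 0, bounds sup_s E X(s)^2 by
  const * (1 + ||u||_2^2).  Finally, for an h-Hoelder K the Bernstein polynomials satisfy
  d <= 2 L T^h n^(-h/2), by splitting |k/n - y|^h according to whether |k/n - y| exceeds
  n^(-1/2) and using the binomial variance sum_k (y - k/n)^2 b_(n,k)(y) = y (1 - y) / n.
*)

section \<open>Gronwall inequalities and mean-square estimates\<close>

lemma gronwall_integral_le:
  fixes F :: "real \<Rightarrow> real"
  assumes T: "0 \<le> T" and c: "0 \<le> c" and cont: "continuous_on {0..T} F"
    and ineq: "\<And>t. t \<in> {0..T} \<Longrightarrow> F t \<le> A + c * integral {0..t} F"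
    and t: "t \<in> {0..T}"
  shows "F t \<le> A * exp (c * t)"
proof -
  define G where "G x = exp (- c * x) * (A + c * integral {0..x} F)" for x
  have der: "(G has_real_derivative exp (- c * x) * (c * F x - c * (A + c * integral {0..x} F))) (at x)"
    if "0 < x" "x < t" for x
  proof -
    have "((\<lambda>x. integral {0..x} F) has_real_derivative F x) (at x within {0..t})"
      by (rule integral_has_real_derivative) (use cont t that in \<open>auto intro: continuous_on_subset\<close>)
    then have d: "((\<lambda>x. integral {0..x} F) has_real_derivative F x) (at x)"
      using at_within_Icc_at[of 0 x t] that by simp
    show ?thesis unfolding G_def
      by (rule derivative_eq_intros d refl | simp)+ (simp add: algebra_simps)
  qed
  have "continuous_on {0..t} (\<lambda>x. integral {0..x} F)"
    by (rule indefinite_integral_continuous_1, rule integrable_continuous_interval)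
       (use cont t in \<open>auto intro: continuous_on_subset\<close>)
  then have contG: "continuous_on {0..t} G"
    unfolding G_def by (intro continuous_intros)
  have "G t \<le> G 0"
  proof (rule DERIV_nonpos_imp_decreasing_open[of 0 t G])
    fix x assume x: "0 < x" "x < t"
    have "c * F x \<le> c * (A + c * integral {0..x} F)"
      using ineq[of x] x t c by (intro mult_left_mono) auto
    then have "exp (- c * x) * (c * F x - c * (A + c * integral {0..x} F)) \<le> 0"
      by (intro mult_nonneg_nonpos) auto
    then show "\<exists>y. (G has_real_derivative y) (at x) \<and> y \<le> 0" using der[OF x] by blast
  qed (use t contG in auto)
  then have "A + c * integral {0..t} F \<le> A * exp (c * t)"
    by (simp add: G_def exp_minus field_simps)
  then show ?thesis using ineq[OF t] by linarith
qed

lemma gronwall_set_integral_le: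
  fixes y a :: "real \<Rightarrow> real"
  assumes T: "0 \<le> T" and c: "0 \<le> c"
    and iy: "set_integrable lborel {0..T} y" and ia: "set_integrable lborel {0..T} a"
    and a0: "\<And>t. t \<in> {0..T} \<Longrightarrow> 0 \<le> a t"
    and ineq: "\<And>t. t \<in> {0..T} \<Longrightarrow> \<bar>y t\<bar> \<le> a t + c * (\<integral>s\<in>{0..t}. \<bar>y s\<bar> \<partial>lborel)"
    and t: "t \<in> {0..T}"
  shows "\<bar>y t\<bar> \<le> a t + c * exp (c * T) * (\<integral>s\<in>{0..T}. a s \<partial>lborel)"
proof -
  define F where "F x = integral {0..x} (\<lambda>s. \<bar>y s\<bar>)" for x
  have iyx: "set_integrable lborel {0..x} (\<lambda>s. \<bar>y s\<bar>)" if "x \<in> {0..T}" for x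
    using that by (intro set_integrable_abs set_integrable_subset[OF iy]) auto
  have Fe: "(\<integral>s\<in>{0..x}. \<bar>y s\<bar> \<partial>lborel) = F x" if "x \<in> {0..T}" for x
    unfolding F_def using set_borel_integral_eq_integral(2)[OF iyx[OF that]] .
  have yI: "(\<lambda>s. \<bar>y s\<bar>) integrable_on {0..x}" if "x \<in> {0..T}" for x
    using set_borel_integral_eq_integral(1)[OF iyx[OF that]] .
  have aI: "a integrable_on {0..x}" if "x \<in> {0..T}" for x
    using that by (intro set_borel_integral_eq_integral(1) set_integrable_subset[OF ia]) auto
  have contF: "continuous_on {0..T} F"
    unfolding F_def by (rule indefinite_integral_continuous_1) (use yI T in auto)
  define A where "A = integral {0..T} a"
  have A0: "0 \<le> A" unfolding A_def using a0 by (intro integral_nonneg aI) (use T in auto)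
  have Fb: "F x \<le> A + c * integral {0..x} F" if x: "x \<in> {0..T}" for x
  proof -
    have FI: "F integrable_on {0..x}"
      by (rule integrable_continuous_interval, rule continuous_on_subset[OF contF]) (use x in auto)
    have "F x \<le> integral {0..x} (\<lambda>s. a s + c * F s)"
      unfolding F_def[of x]
    proof (rule integral_le)
      show "(\<lambda>s. a s + c * F s) integrable_on {0..x}"
        using integrable_add[OF aI[OF x] integrable_on_cmult_left[OF FI, of c]] by simp
      fix s assume "s \<in> {0..x}"
      then show "\<bar>y s\<bar> \<le> a s + c * F s" using ineq Fe x by auto
    qed (rule yI[OF x])
    also have "\<dots> = integral {0..x} a + c * integral {0..x} F"
      using integral_add[OF aI[OF x] integrable_on_cmult_left[OF FI, of c]] by simp
    also have "integral {0..x} a \<le> A"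
      unfolding A_def by (rule integral_subset_le) (use x aI[of T] aI[OF x] T a0 in auto)
    finally show ?thesis by simp
  qed
  have "F t \<le> A * exp (c * t)" by (rule gronwall_integral_le[OF T c contF Fb t])
  also have "\<dots> \<le> A * exp (c * T)" using t A0 c by (auto intro!: mult_left_mono)
  finally have "c * F t \<le> c * (A * exp (c * T))" using c by (rule mult_left_mono)
  moreover have "A = (\<integral>s\<in>{0..T}. a s \<partial>lborel)"
    unfolding A_def using set_borel_integral_eq_integral(2)[OF ia] by simp
  ultimately show ?thesis using ineq[OF t] Fe[OF t] by (simp add: algebra_simps)
qed

lemma set_integral_Cauchy_Schwarz:
  fixes a :: "real \<Rightarrow> real"
  assumes ma: "a \<in> borel_measurable lborel" and a0: "\<And>s. 0 \<le> a s" and T: "0 \<le> T"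
    and fin: "(\<integral>\<^sup>+ s. ennreal ((a s)\<^sup>2) * indicator {0..T} s \<partial>lborel) < \<infinity>"
  shows "set_integrable lborel {0..T} a"
    and "ennreal ((\<integral>s\<in>{0..T}. a s \<partial>lborel)\<^sup>2)
           \<le> ennreal T * (\<integral>\<^sup>+ s. ennreal ((a s)\<^sup>2) * indicator {0..T} s \<partial>lborel)"
proof -
  let ?Q = "\<integral>\<^sup>+ s. ennreal ((a s)\<^sup>2) * indicator {0..T} s \<partial>lborel"
  let ?f = "\<lambda>s. ennreal (a s) * indicator {0..T} s"
  have "(\<integral>\<^sup>+ s. ?f s * indicator {0..T} s \<partial>lborel)\<^sup>2
        \<le> (\<integral>\<^sup>+ s. (?f s)\<^sup>2 \<partial>lborel) * (\<integral>\<^sup>+ s. (indicator {0..T} s :: ennreal)\<^sup>2 \<partial>lborel)"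
    by (rule Cauchy_Schwarz_nn_integral) (use ma in auto)
  also have "(\<integral>\<^sup>+ s. (?f s)\<^sup>2 \<partial>lborel) = ?Q"
    by (intro nn_integral_cong) (auto simp: indicator_def ennreal_power[symmetric] a0)
  also have "(\<integral>\<^sup>+ s. (indicator {0..T} s :: ennreal)\<^sup>2 \<partial>lborel) = (\<integral>\<^sup>+ s. indicator {0..T} s \<partial>lborel)"
    by (intro nn_integral_cong) (auto simp: indicator_def)
  also have "(\<integral>\<^sup>+ s. ?f s * indicator {0..T} s \<partial>lborel) = (\<integral>\<^sup>+ s. ?f s \<partial>lborel)"
    by (intro nn_integral_cong) (auto simp: indicator_def)
  finally have CS: "(\<integral>\<^sup>+ s. ?f s \<partial>lborel)\<^sup>2 \<le> ?Q * ennreal T" using T by simp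
  have "(\<integral>\<^sup>+ s. ?f s \<partial>lborel)\<^sup>2 < \<infinity>"
    using fin by (intro le_less_trans[OF CS]) (simp add: ennreal_mult_less_top)
  then have ftop: "(\<integral>\<^sup>+ s. ?f s \<partial>lborel) < \<infinity>" by (simp add: power_less_top_ennreal)
  have "(\<integral>\<^sup>+ s. ennreal (norm (indicator {0..T} s *\<^sub>R a s)) \<partial>lborel) = (\<integral>\<^sup>+ s. ?f s \<partial>lborel)"
    by (intro nn_integral_cong) (auto simp: indicator_def a0)
  then show si: "set_integrable lborel {0..T} a"
    unfolding set_integrable_def by (intro integrableI_bounded) (use ma ftop in auto)
  have fI: "(\<integral>\<^sup>+ s. ?f s \<partial>lborel) = ennreal (\<integral>s\<in>{0..T}. a s \<partial>lborel)"
    unfolding set_lebesgue_integral_def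
    by (subst nn_integral_eq_integral[symmetric])
       (use si[unfolded set_integrable_def] in \<open>auto simp: a0 intro!: nn_integral_cong split: split_indicator\<close>)
  have "0 \<le> (\<integral>s\<in>{0..T}. a s \<partial>lborel)"
    unfolding set_lebesgue_integral_def by (intro integral_nonneg_AE) (auto simp: a0)
  then show "ennreal ((\<integral>s\<in>{0..T}. a s \<partial>lborel)\<^sup>2) \<le> ennreal T * ?Q"
    using CS fI by (simp add: ennreal_power[symmetric] mult.commute)
qed

lemma square_add_le: "((x::real) + y)\<^sup>2 \<le> 2 * x\<^sup>2 + 2 * y\<^sup>2"
  using zero_le_power2[of "x - y"] by (simp add: power2_eq_square algebra_simps)

lemma gronwall_square_le:
  fixes y a :: "real \<Rightarrow> real"
  assumes T: "0 \<le> T" and c: "0 \<le> c"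
    and ma: "a \<in> borel_measurable lborel" and a0: "\<And>s. 0 \<le> a s"
    and fin: "(\<integral>\<^sup>+ s. ennreal ((a s)\<^sup>2) * indicator {0..T} s \<partial>lborel) < \<infinity>"
    and iy: "set_integrable lborel {0..T} y"
    and ineq: "\<And>t. t \<in> {0..T} \<Longrightarrow> \<bar>y t\<bar> \<le> a t + c * (\<integral>s\<in>{0..t}. \<bar>y s\<bar> \<partial>lborel)"
    and t: "t \<in> {0..T}"
  shows "ennreal ((y t)\<^sup>2) \<le> 2 * ennreal ((a t)\<^sup>2)
           + ennreal (2 * (c * exp (c * T))\<^sup>2 * T) * (\<integral>\<^sup>+ s. ennreal ((a s)\<^sup>2) * indicator {0..T} s \<partial>lborel)"
proof -
  define K where "K = c * exp (c * T)"
  define I where "I = (\<integral>s\<in>{0..T}. a s \<partial>lborel)"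
  note CS = set_integral_Cauchy_Schwarz[OF ma a0 T fin]
  have "\<bar>y t\<bar> \<le> a t + K * I"
    unfolding K_def I_def by (rule gronwall_set_integral_le[OF T c iy CS(1) a0 ineq t])
  moreover have "0 \<le> I" unfolding I_def set_lebesgue_integral_def
    by (intro integral_nonneg_AE) (auto simp: a0)
  ultimately have "(y t)\<^sup>2 \<le> (a t + K * I)\<^sup>2"
    by (metis abs_ge_zero power2_abs power_mono)
  also have "\<dots> \<le> 2 * (a t)\<^sup>2 + 2 * K\<^sup>2 * I\<^sup>2"
    using square_add_le[of "a t" "K * I"] by (simp add: power_mult_distrib)
  finally have "ennreal ((y t)\<^sup>2) \<le> ennreal (2 * (a t)\<^sup>2) + ennreal (2 * K\<^sup>2) * ennreal (I\<^sup>2)"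
    by (simp add: ennreal_plus[symmetric] ennreal_mult[symmetric] del: ennreal_plus)
  also have "\<dots> \<le> ennreal (2 * (a t)\<^sup>2) + ennreal (2 * K\<^sup>2) * (ennreal T * (\<integral>\<^sup>+ s. ennreal ((a s)\<^sup>2) * indicator {0..T} s \<partial>lborel))"
    using CS(2) unfolding I_def by (intro add_mono mult_left_mono) auto
  finally show ?thesis
    using T by (simp add: K_def ennreal_mult mult.assoc)
qed

lemma nn_integral_path_square_le:
  fixes f :: "'a \<Rightarrow> real \<Rightarrow> real"
  assumes M: "sigma_finite_measure M" and T: "0 \<le> T" and A: "0 \<le> A"
    and mf: "(\<lambda>(\<omega>, s). f \<omega> s) \<in> borel_measurable (M \<Otimes>\<^sub>M lborel)"
    and bnd: "\<And>s. s \<in> {0..T} \<Longrightarrow> (\<integral>\<^sup>+\<omega>. ennreal ((f \<omega> s)\<^sup>2) \<partial>M) \<le> ennreal A"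
  shows "(\<integral>\<^sup>+\<omega>. (\<integral>\<^sup>+ s. ennreal ((f \<omega> s)\<^sup>2) * indicator {0..T} s \<partial>lborel) \<partial>M) \<le> ennreal (T * A)"
proof -
  interpret pair_sigma_finite M lborel
    by (intro pair_sigma_finite.intro M lborel.sigma_finite_measure_axioms)
  note [measurable] = mf
  have "(\<lambda>(\<omega>, s). ennreal ((f \<omega> s)\<^sup>2) * indicator {0..T} s) \<in> borel_measurable (M \<Otimes>\<^sub>M lborel)"
    by measurable
  from Fubini'[OF this]
  have "(\<integral>\<^sup>+\<omega>. (\<integral>\<^sup>+ s. ennreal ((f \<omega> s)\<^sup>2) * indicator {0..T} s \<partial>lborel) \<partial>M)
      = (\<integral>\<^sup>+ s. (\<integral>\<^sup>+\<omega>. ennreal ((f \<omega> s)\<^sup>2) \<partial>M) * indicator {0..T} s \<partial>lborel)"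
    by (simp add: nn_integral_multc[symmetric] del: nn_integral_multc)
  also have "\<dots> \<le> (\<integral>\<^sup>+ s. ennreal A * indicator {0..T} s \<partial>lborel)"
    by (intro nn_integral_mono) (auto simp: bnd split: split_indicator)
  also have "\<dots> = ennreal (T * A)"
    using T A by (simp add: nn_integral_cmult_indicator ennreal_mult mult.commute)
  finally show ?thesis .
qed

lemma gronwall_mean_square_le:
  fixes Y a :: "'a \<Rightarrow> real \<Rightarrow> real"
  assumes M: "sigma_finite_measure M" and T: "0 \<le> T" and c: "0 \<le> c" and A: "0 \<le> A"
    and mY: "(\<lambda>(\<omega>, t). Y \<omega> t) \<in> borel_measurable (M \<Otimes>\<^sub>M lborel)"
    and ma: "(\<lambda>(\<omega>, t). a \<omega> t) \<in> borel_measurable (M \<Otimes>\<^sub>M lborel)"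
    and a0: "\<And>\<omega> t. 0 \<le> a \<omega> t"
    and AEY: "AE \<omega> in M. set_integrable lborel {0..T} (Y \<omega>) \<and>
        (\<forall>t\<in>{0..T}. \<bar>Y \<omega> t\<bar> \<le> a \<omega> t + c * (\<integral>s\<in>{0..t}. \<bar>Y \<omega> s\<bar> \<partial>lborel))"
    and bnd: "\<And>s. s \<in> {0..T} \<Longrightarrow> (\<integral>\<^sup>+\<omega>. ennreal ((a \<omega> s)\<^sup>2) \<partial>M) \<le> ennreal A"
    and t: "t \<in> {0..T}"
  shows "(\<integral>\<^sup>+\<omega>. ennreal ((Y \<omega> t)\<^sup>2) \<partial>M) \<le> ennreal ((2 + 2 * (c * exp (c * T))\<^sup>2 * T\<^sup>2) * A)"
proof -
  define Q where "Q \<omega> = (\<integral>\<^sup>+ s. ennreal ((a \<omega> s)\<^sup>2) * indicator {0..T} s \<partial>lborel)" for \<omega>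
  define D where "D = 2 * (c * exp (c * T))\<^sup>2 * T"
  note [measurable] = ma mY
  have mQ: "Q \<in> borel_measurable M" unfolding Q_def by measurable
  have EQ: "(\<integral>\<^sup>+\<omega>. Q \<omega> \<partial>M) \<le> ennreal (T * A)"
    unfolding Q_def using nn_integral_path_square_le[OF M T A ma bnd] by simp
  have "AE \<omega> in M. Q \<omega> \<noteq> \<infinity>"
    by (rule nn_integral_PInf_AE[OF mQ]) (use EQ in \<open>auto simp: top_unique\<close>)
  then have ptw: "AE \<omega> in M. ennreal ((Y \<omega> t)\<^sup>2) \<le> 2 * ennreal ((a \<omega> t)\<^sup>2) + ennreal D * Q \<omega>"
    using AEY AE_space
  proof eventually_elim
    case (elim \<omega>)
    have "a \<omega> \<in> borel_measurable lborel"
      using measurable_Pair2[OF ma \<open>\<omega> \<in> space M\<close>] by simp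
    from gronwall_square_le[where a = "a \<omega>" and y = "Y \<omega>", OF T c this a0 _ _ _ t] elim
    show ?case unfolding Q_def D_def by (simp add: less_top)
  qed
  have "(\<integral>\<^sup>+\<omega>. ennreal ((Y \<omega> t)\<^sup>2) \<partial>M) \<le> (\<integral>\<^sup>+\<omega>. 2 * ennreal ((a \<omega> t)\<^sup>2) + ennreal D * Q \<omega> \<partial>M)"
    by (rule nn_integral_mono_AE[OF ptw])
  also have "\<dots> = 2 * (\<integral>\<^sup>+\<omega>. ennreal ((a \<omega> t)\<^sup>2) \<partial>M) + ennreal D * (\<integral>\<^sup>+\<omega>. Q \<omega> \<partial>M)"
    using mQ by (subst nn_integral_add) (auto simp: nn_integral_cmult)
  also have "\<dots> \<le> 2 * ennreal A + ennreal D * ennreal (T * A)"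
    using bnd[OF t] EQ by (intro add_mono mult_left_mono) auto
  also have "\<dots> = ennreal ((2 + D * T) * A)"
  proof -
    have "0 \<le> D" by (simp add: D_def T)
    then show ?thesis
      using A T by (simp add: ennreal_mult ennreal_plus distrib_right mult.assoc)
  qed
  finally show ?thesis by (simp add: D_def power2_eq_square mult.assoc)
qed

lemma nn_integral_square_add_le:
  fixes f g :: "'a \<Rightarrow> real"
  assumes [measurable]: "f \<in> borel_measurable M" "g \<in> borel_measurable M"
  shows "(\<integral>\<^sup>+\<omega>. ennreal ((f \<omega> + g \<omega>)\<^sup>2) \<partial>M)
           \<le> 2 * (\<integral>\<^sup>+\<omega>. ennreal ((f \<omega>)\<^sup>2) \<partial>M) + 2 * (\<integral>\<^sup>+\<omega>. ennreal ((g \<omega>)\<^sup>2) \<partial>M)"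
proof -
  have "ennreal ((f \<omega> + g \<omega>)\<^sup>2) \<le> 2 * ennreal ((f \<omega>)\<^sup>2) + 2 * ennreal ((g \<omega>)\<^sup>2)" for \<omega>
  proof -
    have "ennreal ((f \<omega> + g \<omega>)\<^sup>2) \<le> ennreal (2 * (f \<omega>)\<^sup>2 + 2 * (g \<omega>)\<^sup>2)"
      by (rule ennreal_leI[OF square_add_le])
    also have "\<dots> = 2 * ennreal ((f \<omega>)\<^sup>2) + 2 * ennreal ((g \<omega>)\<^sup>2)"
      by (simp add: ennreal_plus ennreal_mult)
    finally show ?thesis .
  qed
  then have "(\<integral>\<^sup>+\<omega>. ennreal ((f \<omega> + g \<omega>)\<^sup>2) \<partial>M)
      \<le> (\<integral>\<^sup>+\<omega>. 2 * ennreal ((f \<omega>)\<^sup>2) + 2 * ennreal ((g \<omega>)\<^sup>2) \<partial>M)"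
    by (intro nn_integral_mono)
  also have "\<dots> = 2 * (\<integral>\<^sup>+\<omega>. ennreal ((f \<omega>)\<^sup>2) \<partial>M) + 2 * (\<integral>\<^sup>+\<omega>. ennreal ((g \<omega>)\<^sup>2) \<partial>M)"
    by (simp add: nn_integral_add nn_integral_cmult)
  finally show ?thesis .
qed

lemma nn_integral_square_cmult:
  fixes f :: "'a \<Rightarrow> real"
  assumes "f \<in> borel_measurable M"
  shows "(\<integral>\<^sup>+\<omega>. ennreal ((c * f \<omega>)\<^sup>2) \<partial>M) = ennreal (c\<^sup>2) * (\<integral>\<^sup>+\<omega>. ennreal ((f \<omega>)\<^sup>2) \<partial>M)"
  using assms by (simp add: power_mult_distrib ennreal_mult nn_integral_cmult)

lemma nn_integral_square_combination_le:
  fixes f g h :: "'a \<Rightarrow> real"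
  assumes [measurable]: "f \<in> borel_measurable M" "g \<in> borel_measurable M" "h \<in> borel_measurable M"
    and F: "(\<integral>\<^sup>+\<omega>. ennreal ((f \<omega>)\<^sup>2) \<partial>M) \<le> ennreal F"
    and G: "(\<integral>\<^sup>+\<omega>. ennreal ((g \<omega>)\<^sup>2) \<partial>M) \<le> ennreal G"
    and H: "(\<integral>\<^sup>+\<omega>. ennreal ((h \<omega>)\<^sup>2) \<partial>M) \<le> ennreal H"
    and nonneg: "0 \<le> F" "0 \<le> G" "0 \<le> H"
  shows "(\<integral>\<^sup>+\<omega>. ennreal ((p * f \<omega> + q * g \<omega> + \<bar>h \<omega>\<bar>)\<^sup>2) \<partial>M)
           \<le> ennreal (4 * p\<^sup>2 * F + 4 * q\<^sup>2 * G + 2 * H)"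
proof -
  have "(\<integral>\<^sup>+\<omega>. ennreal ((p * f \<omega> + q * g \<omega> + \<bar>h \<omega>\<bar>)\<^sup>2) \<partial>M)
      \<le> 2 * (\<integral>\<^sup>+\<omega>. ennreal ((p * f \<omega> + q * g \<omega>)\<^sup>2) \<partial>M) + 2 * (\<integral>\<^sup>+\<omega>. ennreal ((h \<omega>)\<^sup>2) \<partial>M)"
    using nn_integral_square_add_le[of "\<lambda>\<omega>. p * f \<omega> + q * g \<omega>" M "\<lambda>\<omega>. \<bar>h \<omega>\<bar>"] by simp
  also have "\<dots> \<le> 2 * (2 * (ennreal (p\<^sup>2) * ennreal F) + 2 * (ennreal (q\<^sup>2) * ennreal G)) + 2 * ennreal H"
  proof (intro add_mono mult_left_mono order_refl)
    have "(\<integral>\<^sup>+\<omega>. ennreal ((p * f \<omega> + q * g \<omega>)\<^sup>2) \<partial>M)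
        \<le> 2 * (ennreal (p\<^sup>2) * (\<integral>\<^sup>+\<omega>. ennreal ((f \<omega>)\<^sup>2) \<partial>M))
          + 2 * (ennreal (q\<^sup>2) * (\<integral>\<^sup>+\<omega>. ennreal ((g \<omega>)\<^sup>2) \<partial>M))"
      using nn_integral_square_add_le[of "\<lambda>\<omega>. p * f \<omega>" M "\<lambda>\<omega>. q * g \<omega>"]
      by (simp add: nn_integral_square_cmult)
    also have "\<dots> \<le> 2 * (ennreal (p\<^sup>2) * ennreal F) + 2 * (ennreal (q\<^sup>2) * ennreal G)"
      by (intro add_mono mult_left_mono F G) auto
    finally show "(\<integral>\<^sup>+\<omega>. ennreal ((p * f \<omega> + q * g \<omega>)\<^sup>2) \<partial>M)
        \<le> 2 * (ennreal (p\<^sup>2) * ennreal F) + 2 * (ennreal (q\<^sup>2) * ennreal G)" .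
  qed (use H in auto)
  also have "\<dots> = ennreal (4 * p\<^sup>2 * F + 4 * q\<^sup>2 * G + 2 * H)"
    using nonneg by (simp add: ennreal_mult ennreal_plus algebra_simps)
  finally show ?thesis .
qed

section \<open>Mean-square bounds for Wiener integrals\<close>

lemma brownian_grid_increments:
  assumes BM: "std_brownian_motion M W" and t: "0 < t" and m: "0 < m"
  defines "D \<equiv> \<lambda>i \<omega>. W (t * real (Suc i) / real m) \<omega> - W (t * real i / real m) \<omega>"
  shows brownian_grid_increment_distributed: "distributed M lborel (D i) (normal_density 0 (sqrt (t / real m)))"
    and brownian_grid_increments_indep: "prob_space.indep_vars M (\<lambda>_. borel) D {..<m}"
proof -
  have eq: "t * real (Suc i) / real m - t * real i / real m = t / real m"
    using m by (simp add: field_simps)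
  have "0 \<le> t * real i / real m" "t * real i / real m < t * real (Suc i) / real m"
    using t m by (auto simp: divide_strict_right_mono)
  then show "distributed M lborel (D i) (normal_density 0 (sqrt (t / real m)))"
    using BM unfolding std_brownian_motion_def D_def eq[symmetric] by auto
  define ts where "ts k = t * real k / real m" for k
  have "0 \<le> ts 0 \<and> (\<forall>k<m. ts k < ts (Suc k))"
    unfolding ts_def using t m by (auto simp: divide_strict_right_mono)
  then have "prob_space.indep_vars M (\<lambda>_. borel) (\<lambda>k \<omega>. W (ts (Suc k)) \<omega> - W (ts k) \<omega>) {..<m}"
    using BM unfolding std_brownian_motion_def by blast
  then show "prob_space.indep_vars M (\<lambda>_. borel) D {..<m}"
    unfolding ts_def D_def by simp
qed

lemma brownian_grid_increment_products:
  assumes BM: "std_brownian_motion M W" and t: "0 < t" and ij: "i < m" "j < m"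
  defines "D \<equiv> \<lambda>i \<omega>. W (t * real (Suc i) / real m) \<omega> - W (t * real i / real m) \<omega>"
  shows "integrable M (\<lambda>\<omega>. D i \<omega> * D j \<omega>)"
    and "prob_space.expectation M (\<lambda>\<omega>. D i \<omega> * D j \<omega>) = (if i = j then t / real m else 0)"
proof -
  interpret prob_space M using BM unfolding std_brownian_motion_def by blast
  have m: "0 < m" using ij by simp
  have sig: "0 < sqrt (t / real m)" using t m by simp
  have dist: "distributed M lborel (D k) (normal_density 0 (sqrt (t / real m)))" for k
    unfolding D_def by (rule brownian_grid_increment_distributed[OF BM t m])
  have intD: "integrable M (D k)" for k
    by (rule distributed_integrable_var[OF dist]) (auto intro: integrable_normal_moment_nz_1[OF sig])
  have ED: "expectation (D k) = 0" for k
    by (rule normal_distributed_expectation[OF sig dist])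
  have "integrable M (\<lambda>\<omega>. D i \<omega> * D j \<omega>) \<and>
        expectation (\<lambda>\<omega>. D i \<omega> * D j \<omega>) = (if i = j then t / real m else 0)"
  proof (cases "i = j")
    case True
    have "integrable lborel (\<lambda>x. normal_density 0 (sqrt (t / real m)) x * x\<^sup>2)"
      using integrable_normal_moment[OF sig, of 0 2] by simp
    then have "integrable M (\<lambda>\<omega>. (D i \<omega>)\<^sup>2)"
      using distributed_integrable[OF dist[of i], of "\<lambda>x. x\<^sup>2"] by simp
    moreover have "expectation (\<lambda>\<omega>. (D i \<omega>)\<^sup>2) = t / real m"
      using normal_distributed_variance[OF sig dist[of i]] ED[of i] t by simp
    ultimately show ?thesis using True by (simp add: power2_eq_square)
  next
    case False
    have "indep_vars (\<lambda>_. borel) D {..<m}"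
      unfolding D_def by (rule brownian_grid_increments_indep[OF BM t m])
    then have "indep_vars (\<lambda>_. borel) D (insert i {j})"
      by (rule indep_vars_subset) (use ij in auto)
    from indep_vars_sum[OF _ _ this] False
    have "indep_var borel (D i) borel (\<lambda>\<omega>. \<Sum>k\<in>{j}. D k \<omega>)" by auto
    then have "indep_var borel (D i) borel (D j)" by simp
    then show ?thesis
      using indep_var_lebesgue_integral[OF _ intD intD] indep_var_integrable[OF _ intD intD] ED False
      by simp
  qed
  then show "integrable M (\<lambda>\<omega>. D i \<omega> * D j \<omega>)"
    and "expectation (\<lambda>\<omega>. D i \<omega> * D j \<omega>) = (if i = j then t / real m else 0)"
    by auto
qed

lemma brownian_riemann_sum_mean_square_le:
  fixes c :: "nat \<Rightarrow> real"
  assumes BM: "std_brownian_motion M W" and t: "0 \<le> t" and cG: "\<And>i. i < m \<Longrightarrow> \<bar>c i\<bar> \<le> G"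
  shows "(\<integral>\<^sup>+\<omega>. ennreal ((\<Sum>i<m. c i * (W (t * real (Suc i) / real m) \<omega> - W (t * real i / real m) \<omega>))\<^sup>2) \<partial>M)
         \<le> ennreal (G\<^sup>2 * t)"
proof (cases "t = 0 \<or> m = 0")
  case True
  then show ?thesis by auto
next
  case False
  then have t0: "0 < t" and m0: "0 < m" using t by auto
  interpret prob_space M using BM unfolding std_brownian_motion_def by blast
  define D where "D i \<omega> = W (t * real (Suc i) / real m) \<omega> - W (t * real i / real m) \<omega>" for i \<omega>
  define S where "S \<omega> = (\<Sum>i<m. \<Sum>j<m. c i * c j * (D i \<omega> * D j \<omega>))" for \<omega>
  have E: "integrable M (\<lambda>\<omega>. D i \<omega> * D j \<omega>)"
      "expectation (\<lambda>\<omega>. D i \<omega> * D j \<omega>) = (if i = j then t / real m else 0)"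
    if "i < m" "j < m" for i j
    using brownian_grid_increment_products[OF BM t0 that] unfolding D_def by auto
  have sq: "(\<Sum>i<m. c i * D i \<omega>)\<^sup>2 = S \<omega>" for \<omega>
    unfolding S_def by (simp add: power2_eq_square sum_product algebra_simps)
  have intS: "integrable M S"
    unfolding S_def by (intro Bochner_Integration.integrable_sum) (auto simp: E(1))
  have "expectation S = (\<Sum>i<m. expectation (\<lambda>\<omega>. \<Sum>j<m. c i * c j * (D i \<omega> * D j \<omega>)))"
    unfolding S_def
    by (rule Bochner_Integration.integral_sum) (auto intro!: Bochner_Integration.integrable_sum simp: E(1))
  also have "\<dots> = (\<Sum>i<m. \<Sum>j<m. expectation (\<lambda>\<omega>. c i * c j * (D i \<omega> * D j \<omega>)))"
    by (intro sum.cong refl Bochner_Integration.integral_sum) (auto simp: E(1))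
  also have "\<dots> = (\<Sum>i<m. \<Sum>j<m. if j = i then c i * c i * (t / real m) else 0)"
    by (intro sum.cong refl) (auto simp: E(2))
  also have "\<dots> = (\<Sum>i<m. c i * c i * (t / real m))"
    by simp
  also have "\<dots> \<le> (\<Sum>i<m. G\<^sup>2 * (t / real m))"
  proof (intro sum_mono mult_right_mono)
    fix i assume "i \<in> {..<m}"
    then have "\<bar>c i\<bar>\<^sup>2 \<le> G\<^sup>2" using cG by (intro power_mono) auto
    then show "c i * c i \<le> G\<^sup>2" by (simp add: power2_eq_square)
  qed (use t in auto)
  also have "\<dots> = G\<^sup>2 * t" using m0 by simp
  finally have "expectation S \<le> G\<^sup>2 * t" .
  moreover have "(\<integral>\<^sup>+\<omega>. ennreal (S \<omega>) \<partial>M) = ennreal (expectation S)"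
    by (rule nn_integral_eq_integral[OF intS]) (simp add: sq[symmetric])
  ultimately show ?thesis
    unfolding D_def[symmetric] sq by (simp add: ennreal_leI)
qed

lemma square_add_le_eps:
  fixes a b e :: real assumes e: "0 < e"
  shows "(a + b)\<^sup>2 \<le> (1 + e) * a\<^sup>2 + (1 + 1 / e) * b\<^sup>2"
proof -
  have "0 \<le> (e * a - b)\<^sup>2" by simp
  then have "2 * (a * b) \<le> e * a\<^sup>2 + b\<^sup>2 / e"
    using e by (simp add: power2_eq_square algebra_simps field_simps)
  then show ?thesis
    using e by (simp add: power2_eq_square algebra_simps add_divide_distrib)
qed

lemma square_diff_le: "((x::real) - y)\<^sup>2 \<le> 2 * x\<^sup>2 + 2 * y\<^sup>2"
  using square_add_le[of x "- y"] by simp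

lemma square_dist_le_approx:
  fixes z z' s s' e :: real assumes e: "0 < e"
  shows "(z - z')\<^sup>2 \<le> (1 + e) * (s - s')\<^sup>2 + (1 + 1 / e) * (2 * (z - s)\<^sup>2 + 2 * (z' - s')\<^sup>2)"
proof -
  have "(z - z')\<^sup>2 \<le> (1 + e) * (s - s')\<^sup>2 + (1 + 1 / e) * ((z - s) - (z' - s'))\<^sup>2"
    using square_add_le_eps[OF e, of "s - s'" "(z - s) - (z' - s')"] by (simp add: algebra_simps)
  also have "\<dots> \<le> (1 + e) * (s - s')\<^sup>2 + (1 + 1 / e) * (2 * (z - s)\<^sup>2 + 2 * (z' - s')\<^sup>2)"
    using square_diff_le[of "z - s" "z' - s'"] e by (intro add_left_mono mult_left_mono) auto
  finally show ?thesis .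
qed

lemma mean_square_dist_le_limit:
  fixes Z Z' :: "'a \<Rightarrow> real" and S S' :: "nat \<Rightarrow> 'a \<Rightarrow> real"
  assumes [measurable]: "Z \<in> borel_measurable M" "Z' \<in> borel_measurable M"
      "\<And>m. S m \<in> borel_measurable M" "\<And>m. S' m \<in> borel_measurable M"
    and lim: "(\<lambda>m. \<integral>\<^sup>+\<omega>. ennreal ((Z \<omega> - S m \<omega>)\<^sup>2) \<partial>M) \<longlonglongrightarrow> 0"
    and lim': "(\<lambda>m. \<integral>\<^sup>+\<omega>. ennreal ((Z' \<omega> - S' m \<omega>)\<^sup>2) \<partial>M) \<longlonglongrightarrow> 0"
    and bnd: "\<And>m. (\<integral>\<^sup>+\<omega>. ennreal ((S m \<omega> - S' m \<omega>)\<^sup>2) \<partial>M) \<le> ennreal c" and c: "0 \<le> c"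
  shows "(\<integral>\<^sup>+\<omega>. ennreal ((Z \<omega> - Z' \<omega>)\<^sup>2) \<partial>M) \<le> ennreal c"
proof (rule ennreal_le_epsilon)
  fix d :: real assume d: "0 < d"
  define e where "e = d / (c + 1)"
  have e: "0 < e" unfolding e_def using d c by simp
  define err where "err m = 2 * (\<integral>\<^sup>+\<omega>. ennreal ((Z \<omega> - S m \<omega>)\<^sup>2) \<partial>M)
                           + 2 * (\<integral>\<^sup>+\<omega>. ennreal ((Z' \<omega> - S' m \<omega>)\<^sup>2) \<partial>M)" for m
  have pw: "ennreal ((Z \<omega> - Z' \<omega>)\<^sup>2) \<le> ennreal (1 + e) * ennreal ((S m \<omega> - S' m \<omega>)\<^sup>2)
      + ennreal (1 + 1 / e) * (2 * ennreal ((Z \<omega> - S m \<omega>)\<^sup>2) + 2 * ennreal ((Z' \<omega> - S' m \<omega>)\<^sup>2))"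
    for m \<omega>
    using ennreal_leI[OF square_dist_le_approx[OF e, of "Z \<omega>" "Z' \<omega>" "S m \<omega>" "S' m \<omega>"]] e
    by (simp add: ennreal_plus ennreal_mult zero_le_mult_iff)
  have "(\<integral>\<^sup>+\<omega>. ennreal ((Z \<omega> - Z' \<omega>)\<^sup>2) \<partial>M) \<le> ennreal (1 + e) * ennreal c + ennreal (1 + 1 / e) * err m"
    for m
  proof -
    have "(\<integral>\<^sup>+\<omega>. ennreal ((Z \<omega> - Z' \<omega>)\<^sup>2) \<partial>M)
        \<le> (\<integral>\<^sup>+\<omega>. ennreal (1 + e) * ennreal ((S m \<omega> - S' m \<omega>)\<^sup>2)
      + ennreal (1 + 1 / e) * (2 * ennreal ((Z \<omega> - S m \<omega>)\<^sup>2) + 2 * ennreal ((Z' \<omega> - S' m \<omega>)\<^sup>2)) \<partial>M)"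
      by (rule nn_integral_mono) (rule pw)
    also have "\<dots> = ennreal (1 + e) * (\<integral>\<^sup>+\<omega>. ennreal ((S m \<omega> - S' m \<omega>)\<^sup>2) \<partial>M)
        + ennreal (1 + 1 / e) * err m"
      unfolding err_def by (simp add: nn_integral_add nn_integral_cmult)
    also have "\<dots> \<le> ennreal (1 + e) * ennreal c + ennreal (1 + 1 / e) * err m"
      by (intro add_right_mono mult_left_mono bnd) auto
    finally show ?thesis .
  qed
  moreover have "(\<lambda>m. ennreal (1 + e) * ennreal c + ennreal (1 + 1 / e) * err m)
      \<longlonglongrightarrow> ennreal (1 + e) * ennreal c + ennreal (1 + 1 / e) * (2 * 0 + 2 * 0)"
    unfolding err_def by (intro tendsto_intros ennreal_tendsto_cmult lim lim') auto
  ultimately have "(\<integral>\<^sup>+\<omega>. ennreal ((Z \<omega> - Z' \<omega>)\<^sup>2) \<partial>M) \<le> ennreal ((1 + e) * c)"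
    using e c by (intro LIMSEQ_le_const) (auto simp: ennreal_mult)
  also have "ennreal ((1 + e) * c) \<le> ennreal (c + d)"
  proof (rule ennreal_leI)
    have "e * c \<le> d" unfolding e_def using d c by (simp add: field_simps)
    then show "(1 + e) * c \<le> c + d" by (simp add: algebra_simps)
  qed
  finally show "(\<integral>\<^sup>+\<omega>. ennreal ((Z \<omega> - Z' \<omega>)\<^sup>2) \<partial>M) \<le> ennreal c + ennreal d"
    using c d by (simp add: ennreal_plus[symmetric] del: ennreal_plus)
qed

lemma wiener_integral_mean_square_dist_le:
  assumes BM: "std_brownian_motion M W" and t: "0 \<le> t"
    and wZ: "wiener_integral M W g t Z" and wZ': "wiener_integral M W g' t Z'"
    and gG: "\<And>s. s \<in> {0..t} \<Longrightarrow> \<bar>g s - g' s\<bar> \<le> G"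
  shows "(\<integral>\<^sup>+\<omega>. ennreal ((Z \<omega> - Z' \<omega>)\<^sup>2) \<partial>M) \<le> ennreal (G\<^sup>2 * t)"
proof -
  have [measurable]: "W s \<in> borel_measurable M" for s
    using BM unfolding std_brownian_motion_def by blast
  define S where "S f m \<omega> = (\<Sum>i<m. f (t * real i / real m) *
      (W (t * real (Suc i) / real m) \<omega> - W (t * real i / real m) \<omega>))" for f m \<omega>
  have grid: "t * real i / real m \<in> {0..t}" if "i < m" for i m
    using t that by (auto simp: field_simps intro!: mult_left_mono)
  show ?thesis
  proof (rule mean_square_dist_le_limit[where S = "S g" and S' = "S g'"])
    show "(\<lambda>m. \<integral>\<^sup>+\<omega>. ennreal ((Z \<omega> - S g m \<omega>)\<^sup>2) \<partial>M) \<longlonglongrightarrow> 0"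
      and "(\<lambda>m. \<integral>\<^sup>+\<omega>. ennreal ((Z' \<omega> - S g' m \<omega>)\<^sup>2) \<partial>M) \<longlonglongrightarrow> 0"
      and "Z \<in> borel_measurable M" and "Z' \<in> borel_measurable M"
      using wZ wZ' unfolding wiener_integral_def S_def by auto
    fix m
    show "S g m \<in> borel_measurable M" "S g' m \<in> borel_measurable M"
      unfolding S_def by measurable
    have "S g m \<omega> - S g' m \<omega> = (\<Sum>i<m. (g (t * real i / real m) - g' (t * real i / real m)) *
        (W (t * real (Suc i) / real m) \<omega> - W (t * real i / real m) \<omega>))" for \<omega>
      unfolding S_def by (simp add: sum_subtractf[symmetric] algebra_simps)
    then show "(\<integral>\<^sup>+\<omega>. ennreal ((S g m \<omega> - S g' m \<omega>)\<^sup>2) \<partial>M) \<le> ennreal (G\<^sup>2 * t)"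
      using brownian_riemann_sum_mean_square_le[OF BM t, of m] gG grid by simp
  qed (use t in simp)
qed

section \<open>Bernstein approximation of Hoelder functions\<close>

lemma bernstein_eq_sum_Bernstein:
  assumes T: "0 < T"
  shows "bernstein T K n x = (\<Sum>k\<le>n. K (T * real k / real n) * Bernstein n k (x / T))"
  unfolding bernstein_def Bernstein_def sum_distrib_left
proof (intro sum.cong refl)
  fix k assume "k \<in> {..n}"
  then have Tn: "T ^ n = T ^ k * T ^ (n - k)" by (simp add: power_add[symmetric])
  have "1 - x / T = (T - x) / T" using T by (simp add: field_simps)
  then show "1 / T ^ n * (K (T * real k / real n) * real (n choose k) * x ^ k * (T - x) ^ (n - k)) =
      K (T * real k / real n) * (real (n choose k) * (x / T) ^ k * (1 - x / T) ^ (n - k))"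
    using T by (simp add: Tn power_divide field_simps)
qed

lemma bernstein_grid_in_interval:
  assumes "0 \<le> T" "k \<le> n"
  shows "T * real k / real n \<in> {0..T}"
proof -
  have "real k / real n \<le> 1"
    using assms by (cases "n = 0") auto
  then have "T * (real k / real n) \<le> T * 1"
    using assms by (intro mult_left_mono) auto
  then show ?thesis using assms by auto
qed

lemma sum_Bernstein_sq_dev:
  assumes n: "1 \<le> n"
  shows "(\<Sum>k\<le>n. (y - k / n)\<^sup>2 * Bernstein n k y) = y * (1 - y) / n"
proof -
  have *: "\<And>a b x::real. (a - b)\<^sup>2 * x = a * (a - 1) * x + (1 - 2 * b) * a * x + b * b * x"
    by (simp add: algebra_simps power2_eq_square)
  have "(\<Sum>k\<le>n. (k - n * y)\<^sup>2 * Bernstein n k y) = n * y * (1 - y)"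
    by (simp add: * sum.distrib, simp flip: sum_distrib_left add: mult.assoc,
        simp add: algebra_simps power2_eq_square)
  then have "(\<Sum>k\<le>n. (k - n * y)\<^sup>2 * Bernstein n k y) / n\<^sup>2 = y * (1 - y) / n"
    by (simp add: power2_eq_square)
  then show ?thesis
    using n by (simp add: sum_divide_distrib field_split_simps power2_commute)
qed

lemma powr_le_split:
  fixes z e h :: real
  assumes z: "0 \<le> z" and e: "0 < e" and h: "0 < h" "h < 2"
  shows "z powr h \<le> e powr h + e powr (h - 2) * z\<^sup>2"
proof (cases "z \<le> e")
  case True
  then have "z powr h \<le> e powr h" using z h by (intro powr_mono2) auto
  then show ?thesis by (simp add: add_increasing2)
next
  case False
  have z2: "z powr 2 = z\<^sup>2" using False z by (simp add: powr_numeral)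
  have "z powr h = z powr (h - 2) * z powr 2"
    by (simp add: powr_add[symmetric])
  also have "\<dots> = z powr (h - 2) * z\<^sup>2" by (simp add: z2)
  also have "\<dots> \<le> e powr (h - 2) * z\<^sup>2"
    using False e h by (intro mult_right_mono powr_mono2') auto
  finally show ?thesis by (simp add: add_increasing)
qed

lemma sum_Bernstein_dist_powr_le:
  assumes n: "1 \<le> n" and y: "0 \<le> y" "y \<le> 1" and h: "0 < h" "h < 2"
  shows "(\<Sum>k\<le>n. \<bar>real k / real n - y\<bar> powr h * Bernstein n k y) \<le> 2 * real n powr (- h / 2)"
proof -
  define e where "e = real n powr (- 1 / 2)"
  have e0: "0 < e" unfolding e_def using n by simp
  have "(\<Sum>k\<le>n. \<bar>real k / real n - y\<bar> powr h * Bernstein n k y)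
      \<le> (\<Sum>k\<le>n. (e powr h + e powr (h - 2) * (y - k / n)\<^sup>2) * Bernstein n k y)"
  proof (intro sum_mono mult_right_mono Bernstein_nonneg[OF y])
    fix k
    show "\<bar>real k / real n - y\<bar> powr h \<le> e powr h + e powr (h - 2) * (y - real k / real n)\<^sup>2"
      using powr_le_split[of "\<bar>real k / real n - y\<bar>" e h] e0 h by (simp add: power2_commute)
  qed
  also have "\<dots> = e powr h * (\<Sum>k\<le>n. Bernstein n k y) + e powr (h - 2) * (\<Sum>k\<le>n. (y - k / n)\<^sup>2 * Bernstein n k y)"
    by (simp add: distrib_right sum.distrib mult.assoc flip: sum_distrib_left)
  also have "\<dots> = e powr h + e powr (h - 2) * (y * (1 - y) / n)"
    by (simp only: sum_Bernstein sum_Bernstein_sq_dev[OF n] mult_1_right)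
  also have "\<dots> \<le> e powr h + e powr (h - 2) * (1 / n)"
    using y n by (intro add_left_mono mult_left_mono divide_right_mono) (auto simp: mult_le_one)
  also have "e powr h = real n powr (- h / 2)"
    unfolding e_def using n by (simp add: powr_powr)
  also have "e powr (h - 2) * (1 / n) = real n powr (- h / 2)"
  proof -
    have "- 1 / 2 * (h - 2) = 1 + - h / 2" by (simp add: field_simps)
    then have "e powr (h - 2) = real n powr (1 + - h / 2)"
      unfolding e_def using n by (simp add: powr_powr)
    also have "\<dots> = real n * real n powr (- h / 2)"
      by (subst powr_add) (use n in simp)
    finally show ?thesis using n by simp
  qed
  finally show ?thesis by simp
qed

lemma bernstein_holder_error:
  fixes K :: "real \<Rightarrow> real"
  assumes T: "0 < T" and h: "0 < h" "h < 2" and n: "1 \<le> n"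
    and L: "\<And>x y. x \<in> {0..T} \<Longrightarrow> y \<in> {0..T} \<Longrightarrow> \<bar>K x - K y\<bar> \<le> L * \<bar>x - y\<bar> powr h"
    and x: "x \<in> {0..T}"
  shows "\<bar>K x - bernstein T K n x\<bar> \<le> 2 * \<bar>L\<bar> * T powr h * real n powr (- h / 2)"
proof -
  define y where "y = x / T"
  have y: "0 \<le> y" "y \<le> 1" using x T unfolding y_def by auto
  define p where "p k = Bernstein n k y" for k
  have p0: "0 \<le> p k" for k unfolding p_def using y by (rule Bernstein_nonneg)
  have "bernstein T K n x - K x = (\<Sum>k\<le>n. (K (T * real k / real n) - K x) * p k)"
    unfolding bernstein_eq_sum_Bernstein[OF T] p_def y_def
    by (simp add: algebra_simps sum_subtractf sum_distrib_left[symmetric])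
  then have "\<bar>K x - bernstein T K n x\<bar> \<le> (\<Sum>k\<le>n. \<bar>K (T * real k / real n) - K x\<bar> * p k)"
    using sum_abs[of "\<lambda>k. (K (T * real k / real n) - K x) * p k" "{..n}"] p0
    by (simp add: abs_minus_commute abs_mult)
  also have "\<dots> \<le> (\<Sum>k\<le>n. (\<bar>L\<bar> * T powr h) * (\<bar>real k / real n - y\<bar> powr h * p k))"
  proof (intro sum_mono)
    fix k assume k: "k \<in> {..n}"
    have "T * real k / real n - x = T * (real k / real n - y)"
      unfolding y_def using T by (simp add: field_simps)
    then have "\<bar>T * real k / real n - x\<bar> powr h = T powr h * \<bar>real k / real n - y\<bar> powr h"
      using T by (simp add: abs_mult powr_mult)
    then have "\<bar>K (T * real k / real n) - K x\<bar> \<le> L * (T powr h * \<bar>real k / real n - y\<bar> powr h)"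
      using L[OF bernstein_grid_in_interval x, of k n] T k by simp
    also have "\<dots> \<le> \<bar>L\<bar> * (T powr h * \<bar>real k / real n - y\<bar> powr h)"
      by (intro mult_right_mono) auto
    finally have "\<bar>K (T * real k / real n) - K x\<bar> \<le> \<bar>L\<bar> * (T powr h * \<bar>real k / real n - y\<bar> powr h)" .
    from mult_right_mono[OF this p0[of k]]
    show "\<bar>K (T * real k / real n) - K x\<bar> * p k \<le> (\<bar>L\<bar> * T powr h) * (\<bar>real k / real n - y\<bar> powr h * p k)"
      by (simp add: mult.assoc)
  qed
  also have "\<dots> = (\<bar>L\<bar> * T powr h) * (\<Sum>k\<le>n. \<bar>real k / real n - y\<bar> powr h * p k)"
    by (simp add: sum_distrib_left)
  also have "\<dots> \<le> (\<bar>L\<bar> * T powr h) * (2 * real n powr (- h / 2))"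
    unfolding p_def by (intro mult_left_mono sum_Bernstein_dist_powr_le[OF n y h]) auto
  finally show ?thesis by (simp add: algebra_simps)
qed

lemma bernstein_abs_le:
  assumes T: "0 < T" and Kb: "\<And>x. x \<in> {0..T} \<Longrightarrow> \<bar>K x\<bar> \<le> B" and x: "x \<in> {0..T}"
  shows "\<bar>bernstein T K n x\<bar> \<le> B"
proof -
  have y: "0 \<le> x / T" "x / T \<le> 1" using x T by auto
  have "\<bar>bernstein T K n x\<bar> \<le> (\<Sum>k\<le>n. \<bar>K (T * real k / real n) * Bernstein n k (x / T)\<bar>)"
    unfolding bernstein_eq_sum_Bernstein[OF T] by (rule sum_abs)
  also have "\<dots> \<le> (\<Sum>k\<le>n. B * Bernstein n k (x / T))"
    using Bernstein_nonneg[OF y] Kb bernstein_grid_in_interval T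
    by (intro sum_mono) (auto simp: abs_mult intro!: mult_right_mono)
  also have "\<dots> = B" by (simp add: sum_distrib_left[symmetric])
  finally show ?thesis .
qed

lemma continuous_on_bernstein: "continuous_on S (bernstein T K n)"
  unfolding bernstein_def by (intro continuous_intros)

lemma holder_on_imp_continuous_on:
  assumes h: "0 < h" and K: "holder_on h S K"
  shows "continuous_on S K"
  unfolding continuous_on_iff
proof (intro ballI allI impI)
  fix x e :: real assume x: "x \<in> S" and e: "0 < e"
  obtain L where L: "\<And>x y. x \<in> S \<Longrightarrow> y \<in> S \<Longrightarrow> \<bar>K x - K y\<bar> \<le> L * \<bar>x - y\<bar> powr h"
    using K unfolding holder_on_def by blast
  define d where "d = (e / (\<bar>L\<bar> + 1)) powr (1 / h)"
  show "\<exists>d>0. \<forall>x'\<in>S. dist x' x < d \<longrightarrow> dist (K x') (K x) < e"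
  proof (intro exI conjI ballI impI)
    show "0 < d" unfolding d_def using e by simp
    fix x' assume x': "x' \<in> S" and dx: "dist x' x < d"
    have "\<bar>x' - x\<bar> powr h < d powr h"
      using dx h by (intro powr_less_mono2) (auto simp: dist_real_def)
    also have "d powr h = e / (\<bar>L\<bar> + 1)"
      unfolding d_def using e h by (simp add: powr_powr)
    finally have "\<bar>L\<bar> * \<bar>x' - x\<bar> powr h \<le> \<bar>L\<bar> * (e / (\<bar>L\<bar> + 1))"
      by (intro mult_left_mono) auto
    also have "\<dots> < e"
      using e by (simp add: field_simps)
    finally have "\<bar>L\<bar> * \<bar>x' - x\<bar> powr h < e" .
    moreover have "\<bar>K x' - K x\<bar> \<le> \<bar>L\<bar> * \<bar>x' - x\<bar> powr h"
      using L[OF x' x] by (smt (verit) mult_right_mono powr_ge_zero abs_ge_self)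
    ultimately show "dist (K x') (K x) < e" by (simp add: dist_real_def)
  qed
qed

section \<open>Paths of solutions\<close>

lemma clamp_real_in_interval [simp]: "0 \<le> T \<Longrightarrow> clamp 0 T (s::real) \<in> {0..T}"
  using clamp_in_interval[of 0 T s] by simp

lemma clamp_real_cancel [simp]: "(s::real) \<in> {0..T} \<Longrightarrow> clamp 0 T s = s"
  using clamp_cancel_cbox[of s 0 T] by simp

lemma borel_measurable_clamp_compose:
  fixes k :: "real \<Rightarrow> real"
  assumes "continuous_on {0..T} k"
  shows "(\<lambda>x. k (clamp 0 T x)) \<in> borel_measurable borel"
  using assms by (intro borel_measurable_continuous_onI clamp_continuous_on) simp

lemma measurable_clamp [measurable]: "clamp 0 (T::real) \<in> borel_measurable borel"
  using borel_measurable_clamp_compose[of T "\<lambda>x. x"] by simp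

lemma measurable_clamp_process:
  fixes T :: real
  assumes X: "(\<lambda>(\<omega>, t). X t \<omega>) \<in> borel_measurable (M \<Otimes>\<^sub>M restrict_space lborel {0..T})" and T: "0 \<le> T"
  shows "(\<lambda>p. X (clamp 0 T (snd p)) (fst p)) \<in> borel_measurable (M \<Otimes>\<^sub>M lborel)"
proof -
  have "(\<lambda>p. clamp 0 T (snd p)) \<in> borel_measurable (M \<Otimes>\<^sub>M lborel)"
    by measurable
  then have "(\<lambda>p. (fst p, clamp 0 T (snd p))) \<in> M \<Otimes>\<^sub>M lborel \<rightarrow>\<^sub>M M \<Otimes>\<^sub>M restrict_space lborel {0..T}"
    by (intro measurable_Pair measurable_restrict_space2) (use clamp_real_in_interval[OF T] in auto)
  from measurable_compose[OF this X] show ?thesis by simp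
qed

lemma borel_measurable_convolution:
  fixes f :: "'a \<Rightarrow> real \<Rightarrow> real" and k :: "real \<Rightarrow> real"
  assumes [measurable]: "k \<in> borel_measurable borel"
    and f: "(\<lambda>p. f (fst p) (snd p)) \<in> borel_measurable (M \<Otimes>\<^sub>M lborel)"
  shows "(\<lambda>p. \<integral>s. indicator {0..snd p} s * (k (snd p - s) * f (fst p) s) \<partial>lborel)
           \<in> borel_measurable (M \<Otimes>\<^sub>M lborel)"
proof -
  have "(\<lambda>q. (fst (fst q), snd q)) \<in> (M \<Otimes>\<^sub>M lborel) \<Otimes>\<^sub>M lborel \<rightarrow>\<^sub>M M \<Otimes>\<^sub>M lborel"
    by measurable
  from measurable_compose[OF this f]
  have [measurable]: "(\<lambda>q. f (fst (fst q)) (snd q)) \<in> borel_measurable ((M \<Otimes>\<^sub>M lborel) \<Otimes>\<^sub>M lborel)"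
    by simp
  have "(\<lambda>q::('a \<times> real) \<times> real. indicator {0..snd (fst q)} (snd q) :: real)
      = (\<lambda>q. indicator {0..} (snd q) * indicator {0..} (snd (fst q) - snd q))"
    by (auto simp: indicator_def fun_eq_iff)
  moreover have "(\<lambda>q::('a \<times> real) \<times> real. indicator {0..} (snd q) * indicator {0..} (snd (fst q) - snd q) :: real)
      \<in> borel_measurable ((M \<Otimes>\<^sub>M lborel) \<Otimes>\<^sub>M lborel)"
    by measurable
  ultimately have [measurable]: "(\<lambda>q::('a \<times> real) \<times> real. indicator {0..snd (fst q)} (snd q) :: real)
      \<in> borel_measurable ((M \<Otimes>\<^sub>M lborel) \<Otimes>\<^sub>M lborel)"
    by simp
  have "(\<lambda>q. indicator {0..snd (fst q)} (snd q) * (k (snd (fst q) - snd q) * f (fst (fst q)) (snd q)))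
        \<in> borel_measurable ((M \<Otimes>\<^sub>M lborel) \<Otimes>\<^sub>M lborel)"
    by measurable
  then show ?thesis
    by (intro lborel.borel_measurable_lebesgue_integral) (simp add: case_prod_beta')
qed

text \<open>Clamping the arguments extends the integrand to the whole line (so that it is measurable on
  \<open>M \<Otimes>\<^sub>M lborel\<close>) without changing the integral for \<open>t \<in> {0..T}\<close>.\<close>

definition volterra_drift ::
  "real \<Rightarrow> real \<Rightarrow> real \<Rightarrow> (real \<Rightarrow> real) \<Rightarrow> (real \<Rightarrow> 'a \<Rightarrow> real) \<Rightarrow> (real \<Rightarrow> 'a \<Rightarrow> real) \<Rightarrow> 'a \<Rightarrow> real \<Rightarrow> real"
  where "volterra_drift T \<alpha> \<beta> k u X \<omega> t =
    (\<integral>s. indicator {0..t} s * (k (clamp 0 T (t - s)) * (\<alpha> * u (clamp 0 T s) \<omega> - \<beta> * X (clamp 0 T s) \<omega>)) \<partial>lborel)"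

definition path_L1_norm :: "real \<Rightarrow> (real \<Rightarrow> 'a \<Rightarrow> real) \<Rightarrow> 'a \<Rightarrow> real"
  where "path_L1_norm T X \<omega> = (\<integral>s. indicator {0..T} s * \<bar>X (clamp 0 T s) \<omega>\<bar> \<partial>lborel)"

lemma path_L1_norm_nonneg: "0 \<le> path_L1_norm T X \<omega>"
  unfolding path_L1_norm_def by (intro integral_nonneg_AE) auto

lemma L2a_facts:
  fixes u :: "real \<Rightarrow> 'a \<Rightarrow> real"
  assumes T: "0 \<le> T" and uL: "u \<in> L2a M W T"
  shows L2a_measurable_clamp: "(\<lambda>p. u (clamp 0 T (snd p)) (fst p)) \<in> borel_measurable (M \<Otimes>\<^sub>M lborel)"
    and L2a_nn_integral: "(\<integral>\<^sup>+\<omega>. (\<integral>\<^sup>+ s. ennreal ((u (clamp 0 T s) \<omega>)\<^sup>2) * indicator {0..T} s \<partial>lborel) \<partial>M)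
                         = ennreal (L2norm_sq M T u)"
    and L2norm_sq_nonneg: "0 \<le> L2norm_sq M T u"
proof -
  have m: "(\<lambda>(\<omega>, t). u t \<omega>) \<in> borel_measurable (prod_T M T)"
    and int: "integrable (prod_T M T) (\<lambda>(\<omega>, t). (u t \<omega>)\<^sup>2)"
    using uL unfolding L2a_def by auto
  show "(\<lambda>p. u (clamp 0 T (snd p)) (fst p)) \<in> borel_measurable (M \<Otimes>\<^sub>M lborel)"
    by (rule measurable_clamp_process[OF m T])
  show "0 \<le> L2norm_sq M T u" unfolding L2norm_sq_def
    by (intro integral_nonneg_AE) (auto split: prod.splits)
  interpret sigma_finite_measure "restrict_space lborel {0..T}"
    by (intro sigma_finite_measure_restrict_space) (auto simp: lborel.sigma_finite_measure_axioms)
  have "(\<lambda>x. ennreal ((case x of (\<omega>, t) \<Rightarrow> u t \<omega>)\<^sup>2)) \<in> borel_measurable (prod_T M T)"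
    using m by measurable
  from nn_integral_fst[OF this]
  have "(\<integral>\<^sup>+\<omega>. (\<integral>\<^sup>+ t. ennreal ((u t \<omega>)\<^sup>2) \<partial>restrict_space lborel {0..T}) \<partial>M)
      = (\<integral>\<^sup>+ x. ennreal ((case x of (\<omega>, t) \<Rightarrow> u t \<omega>)\<^sup>2) \<partial>prod_T M T)"
    by simp
  also have "\<dots> = ennreal (L2norm_sq M T u)"
    unfolding L2norm_sq_def
    by (subst nn_integral_eq_integral[symmetric]) (use int in \<open>auto intro!: nn_integral_cong split: prod.splits\<close>)
  moreover have "(\<integral>\<^sup>+ t. ennreal ((u t \<omega>)\<^sup>2) \<partial>restrict_space lborel {0..T})
      = (\<integral>\<^sup>+ s. ennreal ((u (clamp 0 T s) \<omega>)\<^sup>2) * indicator {0..T} s \<partial>lborel)" for \<omega>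
    by (subst nn_integral_restrict_space) (auto intro!: nn_integral_cong split: split_indicator)
  ultimately show "(\<integral>\<^sup>+\<omega>. (\<integral>\<^sup>+ s. ennreal ((u (clamp 0 T s) \<omega>)\<^sup>2) * indicator {0..T} s \<partial>lborel) \<partial>M)
                 = ennreal (L2norm_sq M T u)"
    by simp
qed

lemma volterra_solution_facts:
  fixes u X :: "real \<Rightarrow> 'a \<Rightarrow> real"
  assumes T: "0 \<le> T" and uL: "u \<in> L2a M W T"
    and sol: "volterra_solution M W T X0 \<alpha> \<beta> \<sigma> k u X" and kc: "continuous_on {0..T} k"
  shows volterra_solution_measurable_clamp:
      "(\<lambda>p. X (clamp 0 T (snd p)) (fst p)) \<in> borel_measurable (M \<Otimes>\<^sub>M lborel)"
    and volterra_drift_measurable: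
      "(\<lambda>p. volterra_drift T \<alpha> \<beta> k u X (fst p) (snd p)) \<in> borel_measurable (M \<Otimes>\<^sub>M lborel)"
    and volterra_solution_AE_path_integrable:
      "AE \<omega> in M. set_integrable lborel {0..T} (\<lambda>s. X (clamp 0 T s) \<omega>)"
    and volterra_solution_drift_eq: "\<And>t. t \<in> {0..T} \<Longrightarrow> \<exists>Z. wiener_integral M W (\<lambda>s. k (t - s)) t Z \<and>
        (AE \<omega> in M. X t \<omega> = X0 + volterra_drift T \<alpha> \<beta> k u X \<omega> t + \<sigma> * Z \<omega>)"
proof -
  have m: "(\<lambda>(\<omega>, t). X t \<omega>) \<in> borel_measurable (prod_T M T)"
    and ae: "AE \<omega> in M. set_integrable lborel {0..T} (\<lambda>s. X s \<omega>)"
    and eq: "\<And>t. t \<in> {0..T} \<Longrightarrow> \<exists>Z. wiener_integral M W (\<lambda>s. k (t - s)) t Z \<and>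
        (AE \<omega> in M. X t \<omega> = X0 + (\<integral>s\<in>{0..t}. k (t - s) * (\<alpha> * u s \<omega> - \<beta> * X s \<omega>) \<partial>lborel) + \<sigma> * Z \<omega>)"
    using sol unfolding volterra_solution_def by auto
  show Xm: "(\<lambda>p. X (clamp 0 T (snd p)) (fst p)) \<in> borel_measurable (M \<Otimes>\<^sub>M lborel)"
    by (rule measurable_clamp_process[OF m T])
  note [measurable] = Xm L2a_measurable_clamp[OF T uL]
  show "(\<lambda>p. volterra_drift T \<alpha> \<beta> k u X (fst p) (snd p)) \<in> borel_measurable (M \<Otimes>\<^sub>M lborel)"
    unfolding volterra_drift_def
    by (rule borel_measurable_convolution[OF borel_measurable_clamp_compose[OF kc],
          where f = "\<lambda>\<omega> s. \<alpha> * u (clamp 0 T s) \<omega> - \<beta> * X (clamp 0 T s) \<omega>"]) measurable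
  show "AE \<omega> in M. set_integrable lborel {0..T} (\<lambda>s. X (clamp 0 T s) \<omega>)"
    using ae by eventually_elim (subst set_integrable_cong[OF refl refl], auto)
  fix t assume t: "t \<in> {0..T}"
  have "(\<integral>s\<in>{0..t}. k (t - s) * (\<alpha> * u s \<omega> - \<beta> * X s \<omega>) \<partial>lborel) = volterra_drift T \<alpha> \<beta> k u X \<omega> t" for \<omega>
    unfolding volterra_drift_def set_lebesgue_integral_def
    by (intro Bochner_Integration.integral_cong refl) (use t in \<open>auto split: split_indicator\<close>)
  then show "\<exists>Z. wiener_integral M W (\<lambda>s. k (t - s)) t Z \<and>
      (AE \<omega> in M. X t \<omega> = X0 + volterra_drift T \<alpha> \<beta> k u X \<omega> t + \<sigma> * Z \<omega>)"
    using eq[OF t] by auto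
qed

lemma borel_measurable_path_L1_norm:
  assumes "(\<lambda>p. X (clamp 0 T (snd p)) (fst p)) \<in> borel_measurable (M \<Otimes>\<^sub>M lborel)"
  shows "path_L1_norm T X \<in> borel_measurable M"
  unfolding path_L1_norm_def using assms
  by (intro lborel.borel_measurable_lebesgue_integral) (simp add: case_prod_beta')

lemma path_L1_norm_mean_square_le:
  fixes X :: "real \<Rightarrow> 'a \<Rightarrow> real"
  assumes T: "0 < T" and Xm: "(\<lambda>p. X (clamp 0 T (snd p)) (fst p)) \<in> borel_measurable (M \<Otimes>\<^sub>M lborel)"
  shows "(\<integral>\<^sup>+\<omega>. ennreal ((path_L1_norm T X \<omega>)\<^sup>2) \<partial>M)
           \<le> ennreal T * (\<integral>\<^sup>+\<omega>. (\<integral>\<^sup>+ s. ennreal ((X (clamp 0 T s) \<omega>)\<^sup>2) * indicator {0..T} s \<partial>lborel) \<partial>M)"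
proof -
  note [measurable] = Xm
  define Q where "Q \<omega> = (\<integral>\<^sup>+ s. ennreal ((X (clamp 0 T s) \<omega>)\<^sup>2) * indicator {0..T} s \<partial>lborel)" for \<omega>
  have Qm: "Q \<in> borel_measurable M" unfolding Q_def
    by (rule lborel.borel_measurable_nn_integral) (simp add: case_prod_beta')
  have "ennreal ((path_L1_norm T X \<omega>)\<^sup>2) \<le> ennreal T * Q \<omega>" if \<omega>: "\<omega> \<in> space M" for \<omega>
  proof (cases "Q \<omega> < \<infinity>")
    case True
    have "(\<lambda>s. X (clamp 0 T s) \<omega>) \<in> borel_measurable lborel"
      using measurable_Pair2[OF Xm \<omega>] by simp
    then have "(\<lambda>s. \<bar>X (clamp 0 T s) \<omega>\<bar>) \<in> borel_measurable lborel" by measurable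
    moreover have "(\<integral>\<^sup>+ s. ennreal (\<bar>X (clamp 0 T s) \<omega>\<bar>\<^sup>2) * indicator {0..T} s \<partial>lborel) < \<infinity>"
      using True unfolding Q_def by simp
    ultimately show ?thesis
      using set_integral_Cauchy_Schwarz(2)[OF _ abs_ge_zero] T
      unfolding Q_def path_L1_norm_def set_lebesgue_integral_def by simp
  qed (use T in \<open>simp add: ennreal_mult_top less_top[symmetric]\<close>)
  then have "(\<integral>\<^sup>+\<omega>. ennreal ((path_L1_norm T X \<omega>)\<^sup>2) \<partial>M) \<le> (\<integral>\<^sup>+\<omega>. ennreal T * Q \<omega> \<partial>M)"
    by (intro nn_integral_mono)
  also have "\<dots> = ennreal T * (\<integral>\<^sup>+\<omega>. Q \<omega> \<partial>M)"
    by (rule nn_integral_cmult[OF Qm])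
  finally show ?thesis unfolding Q_def .
qed

lemma path_L1_norm_mean_square_le_moment_bound:
  fixes X :: "real \<Rightarrow> 'a \<Rightarrow> real"
  assumes M: "sigma_finite_measure M" and T: "0 < T"
    and Xm: "(\<lambda>p. X (clamp 0 T (snd p)) (fst p)) \<in> borel_measurable (M \<Otimes>\<^sub>M lborel)"
    and XB: "\<And>s. s \<in> {0..T} \<Longrightarrow> (\<integral>\<^sup>+\<omega>. ennreal ((X s \<omega>)\<^sup>2) \<partial>M) \<le> ennreal CX" and CX: "0 \<le> CX"
  shows "(\<integral>\<^sup>+\<omega>. ennreal ((path_L1_norm T X \<omega>)\<^sup>2) \<partial>M) \<le> ennreal (T * (T * CX))"
proof -
  have "(\<integral>\<^sup>+\<omega>. ennreal ((path_L1_norm T X \<omega>)\<^sup>2) \<partial>M)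
      \<le> ennreal T * (\<integral>\<^sup>+\<omega>. (\<integral>\<^sup>+ s. ennreal ((X (clamp 0 T s) \<omega>)\<^sup>2) * indicator {0..T} s \<partial>lborel) \<partial>M)"
    by (rule path_L1_norm_mean_square_le[OF T Xm])
  also have "\<dots> \<le> ennreal T * ennreal (T * CX)"
    using XB T by (intro mult_left_mono nn_integral_path_square_le[OF M _ CX]) (auto simp: case_prod_beta' Xm)
  finally show ?thesis
    using T CX by (simp add: ennreal_mult)
qed

lemma L2a_path_facts:
  fixes u :: "real \<Rightarrow> 'a \<Rightarrow> real"
  assumes T: "0 < T" and uL: "u \<in> L2a M W T"
  shows L2a_AE_path_integrable: "AE \<omega> in M. set_integrable lborel {0..T} (\<lambda>s. u (clamp 0 T s) \<omega>)"
    and L2a_path_L1_norm_mean_square_le: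
      "(\<integral>\<^sup>+\<omega>. ennreal ((path_L1_norm T u \<omega>)\<^sup>2) \<partial>M) \<le> ennreal (T * L2norm_sq M T u)"
proof -
  have T0: "0 \<le> T" using T by simp
  note um [measurable] = L2a_measurable_clamp[OF T0 uL]
  have "(\<lambda>\<omega>. \<integral>\<^sup>+ s. ennreal ((u (clamp 0 T s) \<omega>)\<^sup>2) * indicator {0..T} s \<partial>lborel) \<in> borel_measurable M"
    by (rule lborel.borel_measurable_nn_integral) (use um in \<open>simp add: case_prod_beta'\<close>)
  from nn_integral_PInf_AE[OF this] L2a_nn_integral[OF T0 uL]
  have "AE \<omega> in M. (\<integral>\<^sup>+ s. ennreal ((u (clamp 0 T s) \<omega>)\<^sup>2) * indicator {0..T} s \<partial>lborel) < \<infinity>"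
    by (simp add: less_top)
  then show "AE \<omega> in M. set_integrable lborel {0..T} (\<lambda>s. u (clamp 0 T s) \<omega>)"
  proof (rule AE_mp, intro AE_I2 impI)
    fix \<omega> assume \<omega>: "\<omega> \<in> space M"
      and fin: "(\<integral>\<^sup>+ s. ennreal ((u (clamp 0 T s) \<omega>)\<^sup>2) * indicator {0..T} s \<partial>lborel) < \<infinity>"
    have m\<omega>: "(\<lambda>s. u (clamp 0 T s) \<omega>) \<in> borel_measurable lborel"
      using measurable_Pair2[OF um \<omega>] by simp
    then have "(\<lambda>s. \<bar>u (clamp 0 T s) \<omega>\<bar>) \<in> borel_measurable lborel" by measurable
    moreover have "(\<integral>\<^sup>+ s. ennreal (\<bar>u (clamp 0 T s) \<omega>\<bar>\<^sup>2) * indicator {0..T} s \<partial>lborel) < \<infinity>"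
      using fin by simp
    ultimately have "set_integrable lborel {0..T} (\<lambda>s. \<bar>u (clamp 0 T s) \<omega>\<bar>)"
      using T0 by (intro set_integral_Cauchy_Schwarz(1)) auto
    then show "set_integrable lborel {0..T} (\<lambda>s. u (clamp 0 T s) \<omega>)"
      using set_integrable_abs_iff'[OF m\<omega>] by simp
  qed
  show "(\<integral>\<^sup>+\<omega>. ennreal ((path_L1_norm T u \<omega>)\<^sup>2) \<partial>M) \<le> ennreal (T * L2norm_sq M T u)"
    using path_L1_norm_mean_square_le[OF T um] L2a_nn_integral[OF T0 uL]
      L2norm_sq_nonneg[OF T0 uL] T
    by (simp add: ennreal_mult)
qed

lemma integrable_indicator_abs:
  assumes "set_integrable lborel {0..T} (f :: real \<Rightarrow> real)" "t \<in> {0..T}"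
  shows "integrable lborel (\<lambda>s. indicator {0..t} s * \<bar>f s\<bar>)"
  using set_integrable_abs[OF set_integrable_subset[OF assms(1), of "{0..t}"]] assms(2)
  unfolding set_integrable_def by auto

lemma integral_indicator_abs_mono:
  assumes "set_integrable lborel {0..T} (f :: real \<Rightarrow> real)" "t \<in> {0..T}"
  shows "(\<integral>s. indicator {0..t} s * \<bar>f s\<bar> \<partial>lborel) \<le> (\<integral>s. indicator {0..T} s * \<bar>f s\<bar> \<partial>lborel)"
  using assms by (intro integral_mono integrable_indicator_abs[OF assms(1)]) (auto simp: indicator_def)

lemma convolution_integrable:
  fixes uc xc k :: "real \<Rightarrow> real"
  assumes km: "k \<in> borel_measurable borel" and kb: "\<And>x. \<bar>k x\<bar> \<le> B"
    and um: "uc \<in> borel_measurable lborel" and xm: "xc \<in> borel_measurable lborel"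
    and ui: "set_integrable lborel {0..T} uc" and xi: "set_integrable lborel {0..T} xc"
    and t: "t \<in> {0..T}"
  shows "integrable lborel (\<lambda>s. indicator {0..t} s * (k (t - s) * (\<alpha> * uc s - \<beta> * xc s)))"
proof (rule Bochner_Integration.integrable_bound)
  show "integrable lborel (\<lambda>s. B * \<bar>\<alpha>\<bar> * (indicator {0..t} s * \<bar>uc s\<bar>) + B * \<bar>\<beta>\<bar> * (indicator {0..t} s * \<bar>xc s\<bar>))"
    using integrable_indicator_abs[OF ui t] integrable_indicator_abs[OF xi t] by simp
  show "(\<lambda>s. indicator {0..t} s * (k (t - s) * (\<alpha> * uc s - \<beta> * xc s))) \<in> borel_measurable lborel"
    using km um xm by measurable
  have B0: "0 \<le> B" using kb[of 0] by linarith
  have "\<bar>k (t - s) * (\<alpha> * uc s - \<beta> * xc s)\<bar> \<le> B * (\<bar>\<alpha>\<bar> * \<bar>uc s\<bar> + \<bar>\<beta>\<bar> * \<bar>xc s\<bar>)" for s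
    unfolding abs_mult using kb[of "t - s"] B0 abs_triangle_ineq4[of "\<alpha> * uc s" "\<beta> * xc s"]
    by (intro mult_mono) (auto simp: abs_mult)
  then show "AE s in lborel. norm (indicator {0..t} s * (k (t - s) * (\<alpha> * uc s - \<beta> * xc s)))
      \<le> norm (B * \<bar>\<alpha>\<bar> * (indicator {0..t} s * \<bar>uc s\<bar>) + B * \<bar>\<beta>\<bar> * (indicator {0..t} s * \<bar>xc s\<bar>))"
    by (intro AE_I2) (auto simp: indicator_def algebra_simps intro: order_trans[OF _ abs_ge_self])
qed

lemma convolution_diff_abs_le:
  fixes uc xc yc k k' :: "real \<Rightarrow> real"
  assumes km: "k \<in> borel_measurable borel" and k'm: "k' \<in> borel_measurable borel"
    and kb: "\<And>x. \<bar>k x\<bar> \<le> B" and k'b: "\<And>x. \<bar>k' x\<bar> \<le> B" and kd: "\<And>x. \<bar>k x - k' x\<bar> \<le> \<delta>"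
    and um: "uc \<in> borel_measurable lborel" and xm: "xc \<in> borel_measurable lborel"
    and ym: "yc \<in> borel_measurable lborel"
    and ui: "set_integrable lborel {0..T} uc" and xi: "set_integrable lborel {0..T} xc"
    and yi: "set_integrable lborel {0..T} yc"
    and t: "t \<in> {0..T}" and \<alpha>: "0 \<le> \<alpha>" and \<beta>: "0 \<le> \<beta>"
  shows "\<bar>(\<integral>s. indicator {0..t} s * (k (t - s) * (\<alpha> * uc s - \<beta> * xc s)) \<partial>lborel)
          - (\<integral>s. indicator {0..t} s * (k' (t - s) * (\<alpha> * uc s - \<beta> * yc s)) \<partial>lborel)\<bar>
     \<le> \<delta> * (\<alpha> * (\<integral>s. indicator {0..T} s * \<bar>uc s\<bar> \<partial>lborel) + \<beta> * (\<integral>s. indicator {0..T} s * \<bar>xc s\<bar> \<partial>lborel))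
       + \<beta> * B * (\<integral>s. indicator {0..t} s * \<bar>xc s - yc s\<bar> \<partial>lborel)"
proof -
  have B0: "0 \<le> B" using k'b[of 0] by linarith
  have d0: "0 \<le> \<delta>" using kd[of 0] by linarith
  have xyi: "set_integrable lborel {0..T} (\<lambda>s. xc s - yc s)" by (rule set_integral_diff(1)[OF xi yi])
  note int = integrable_indicator_abs[OF ui t] integrable_indicator_abs[OF xi t]
    integrable_indicator_abs[OF xyi t]
  define \<psi> where "\<psi> s = \<delta> * \<alpha> * (indicator {0..t} s * \<bar>uc s\<bar>) + \<delta> * \<beta> * (indicator {0..t} s * \<bar>xc s\<bar>)
      + \<beta> * B * (indicator {0..t} s * \<bar>xc s - yc s\<bar>)" for s
  have \<phi>\<psi>: "\<bar>indicator {0..t} s * (k (t - s) * (\<alpha> * uc s - \<beta> * xc s))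
      - indicator {0..t} s * (k' (t - s) * (\<alpha> * uc s - \<beta> * yc s))\<bar> \<le> \<psi> s" for s
  proof (cases "s \<in> {0..t}")
    case True
    have "\<bar>(k (t - s) - k' (t - s)) * (\<alpha> * uc s - \<beta> * xc s)\<bar> \<le> \<delta> * (\<alpha> * \<bar>uc s\<bar> + \<beta> * \<bar>xc s\<bar>)"
      unfolding abs_mult using kd[of "t - s"] d0 \<alpha> \<beta> abs_triangle_ineq4[of "\<alpha> * uc s" "\<beta> * xc s"]
      by (intro mult_mono) (auto simp: abs_mult)
    moreover have "\<bar>k' (t - s) * (\<beta> * (yc s - xc s))\<bar> \<le> B * (\<beta> * \<bar>xc s - yc s\<bar>)"
      unfolding abs_mult using k'b[of "t - s"] B0 \<beta> by (intro mult_mono) (auto simp: abs_minus_commute)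
    moreover have "k (t - s) * (\<alpha> * uc s - \<beta> * xc s) - k' (t - s) * (\<alpha> * uc s - \<beta> * yc s)
       = (k (t - s) - k' (t - s)) * (\<alpha> * uc s - \<beta> * xc s) + k' (t - s) * (\<beta> * (yc s - xc s))"
      by (simp add: algebra_simps)
    ultimately show ?thesis
      using True abs_triangle_ineq[of "(k (t - s) - k' (t - s)) * (\<alpha> * uc s - \<beta> * xc s)"
          "k' (t - s) * (\<beta> * (yc s - xc s))"]
      unfolding \<psi>_def by (simp add: algebra_simps)
  qed (simp add: \<psi>_def)
  have i1: "integrable lborel (\<lambda>s. indicator {0..t} s * (k (t - s) * (\<alpha> * uc s - \<beta> * xc s)))"
    by (rule convolution_integrable[OF km kb um xm ui xi t])
  have i2: "integrable lborel (\<lambda>s. indicator {0..t} s * (k' (t - s) * (\<alpha> * uc s - \<beta> * yc s)))"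
    by (rule convolution_integrable[OF k'm k'b um ym ui yi t])
  have "\<bar>(\<integral>s. indicator {0..t} s * (k (t - s) * (\<alpha> * uc s - \<beta> * xc s)) \<partial>lborel)
          - (\<integral>s. indicator {0..t} s * (k' (t - s) * (\<alpha> * uc s - \<beta> * yc s)) \<partial>lborel)\<bar>
      = \<bar>\<integral>s. indicator {0..t} s * (k (t - s) * (\<alpha> * uc s - \<beta> * xc s))
          - indicator {0..t} s * (k' (t - s) * (\<alpha> * uc s - \<beta> * yc s)) \<partial>lborel\<bar>"
    using i1 i2 by simp
  also have "\<dots> \<le> integral\<^sup>L lborel \<psi>"
    using i1 i2 int by (intro integral_abs_bound_integral \<phi>\<psi>) (auto simp: \<psi>_def)
  also have "\<dots> \<le> \<delta> * \<alpha> * (\<integral>s. indicator {0..T} s * \<bar>uc s\<bar> \<partial>lborel) + \<delta> * \<beta> * (\<integral>s. indicator {0..T} s * \<bar>xc s\<bar> \<partial>lborel)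
      + \<beta> * B * (\<integral>s. indicator {0..t} s * \<bar>xc s - yc s\<bar> \<partial>lborel)"
    unfolding \<psi>_def using int integral_indicator_abs_mono[OF ui t] integral_indicator_abs_mono[OF xi t] d0 \<alpha> \<beta>
    by (simp, intro add_mono mult_left_mono) auto
  finally show ?thesis by (simp add: algebra_simps)
qed

section \<open>Stability of the Volterra equation\<close>

lemma volterra_difference_AE_pathwise_le:
  fixes u X X' :: "real \<Rightarrow> 'a \<Rightarrow> real" and k k' :: "real \<Rightarrow> real"
  assumes T: "0 < T" and \<alpha>: "0 \<le> \<alpha>" and \<beta>: "0 \<le> \<beta>" and uL: "u \<in> L2a M W T"
    and sol: "volterra_solution M W T X0 \<alpha> \<beta> \<sigma> k u X"
    and sol': "volterra_solution M W T X0 \<alpha> \<beta> \<sigma> k' u X'"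
    and kc: "continuous_on {0..T} k" and k'c: "continuous_on {0..T} k'"
    and kb: "\<And>x. x \<in> {0..T} \<Longrightarrow> \<bar>k x\<bar> \<le> B" and k'b: "\<And>x. x \<in> {0..T} \<Longrightarrow> \<bar>k' x\<bar> \<le> B"
    and kd: "\<And>x. x \<in> {0..T} \<Longrightarrow> \<bar>k x - k' x\<bar> \<le> \<delta>"
  defines "Y \<equiv> \<lambda>\<omega> s. X (clamp 0 T s) \<omega> - X' (clamp 0 T s) \<omega>"
    and "R \<equiv> \<lambda>\<omega> s. (X (clamp 0 T s) \<omega> - volterra_drift T \<alpha> \<beta> k u X \<omega> s)
                   - (X' (clamp 0 T s) \<omega> - volterra_drift T \<alpha> \<beta> k' u X' \<omega> s)"
  shows "AE \<omega> in M. set_integrable lborel {0..T} (Y \<omega>) \<and>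
    (\<forall>t\<in>{0..T}. \<bar>Y \<omega> t\<bar> \<le> \<delta> * (\<alpha> * path_L1_norm T u \<omega> + \<beta> * path_L1_norm T X \<omega>) + \<bar>R \<omega> t\<bar>
                           + \<beta> * B * (\<integral>s\<in>{0..t}. \<bar>Y \<omega> s\<bar> \<partial>lborel))"
proof -
  have T0: "0 \<le> T" using T by simp
  show ?thesis
    using volterra_solution_AE_path_integrable[OF T0 uL sol kc]
      volterra_solution_AE_path_integrable[OF T0 uL sol' k'c] L2a_AE_path_integrable[OF T uL] AE_space
  proof eventually_elim
    case (elim \<omega>)
    have meas: "(\<lambda>s. f (clamp 0 T s) \<omega>) \<in> borel_measurable lborel"
      if "(\<lambda>p. f (clamp 0 T (snd p)) (fst p)) \<in> borel_measurable (M \<Otimes>\<^sub>M lborel)" for f :: "real \<Rightarrow> 'a \<Rightarrow> real"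
      using measurable_Pair2[OF that \<open>\<omega> \<in> space M\<close>] by simp
    have "\<bar>k (clamp 0 T x)\<bar> \<le> B" "\<bar>k' (clamp 0 T x)\<bar> \<le> B" "\<bar>k (clamp 0 T x) - k' (clamp 0 T x)\<bar> \<le> \<delta>" for x
      using kb k'b kd clamp_real_in_interval[OF T0] by blast+
    note conv = convolution_diff_abs_le[OF borel_measurable_clamp_compose[OF kc]
        borel_measurable_clamp_compose[OF k'c] this
        meas[OF L2a_measurable_clamp[OF T0 uL]] meas[OF volterra_solution_measurable_clamp[OF T0 uL sol kc]]
        meas[OF volterra_solution_measurable_clamp[OF T0 uL sol' k'c]] elim(3) elim(1) elim(2) _ \<alpha> \<beta>]
    have "\<bar>Y \<omega> t\<bar> \<le> \<delta> * (\<alpha> * path_L1_norm T u \<omega> + \<beta> * path_L1_norm T X \<omega>) + \<bar>R \<omega> t\<bar>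
                     + \<beta> * B * (\<integral>s\<in>{0..t}. \<bar>Y \<omega> s\<bar> \<partial>lborel)" if t: "t \<in> {0..T}" for t
    proof -
      have "Y \<omega> t = (volterra_drift T \<alpha> \<beta> k u X \<omega> t - volterra_drift T \<alpha> \<beta> k' u X' \<omega> t) + R \<omega> t"
        unfolding Y_def R_def by simp
      then show ?thesis
        using conv[OF t] unfolding volterra_drift_def path_L1_norm_def Y_def set_lebesgue_integral_def
        by (simp add: algebra_simps)
    qed
    moreover have "set_integrable lborel {0..T} (Y \<omega>)"
      unfolding Y_def by (rule set_integral_diff(1)[OF elim(1) elim(2)])
    ultimately show ?case by blast
  qed
qed

lemma volterra_noise_mean_square_dist_le:
  fixes u X X' :: "real \<Rightarrow> 'a \<Rightarrow> real" and k k' :: "real \<Rightarrow> real"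
  assumes BM: "std_brownian_motion M W" and T: "0 \<le> T" and uL: "u \<in> L2a M W T"
    and sol: "volterra_solution M W T X0 \<alpha> \<beta> \<sigma> k u X"
    and sol': "volterra_solution M W T X0 \<alpha> \<beta> \<sigma> k' u X'"
    and kc: "continuous_on {0..T} k" and k'c: "continuous_on {0..T} k'"
    and kd: "\<And>x. x \<in> {0..T} \<Longrightarrow> \<bar>k x - k' x\<bar> \<le> \<delta>" and s: "s \<in> {0..T}"
  shows "(\<integral>\<^sup>+\<omega>. ennreal (((X s \<omega> - volterra_drift T \<alpha> \<beta> k u X \<omega> s)
                         - (X' s \<omega> - volterra_drift T \<alpha> \<beta> k' u X' \<omega> s))\<^sup>2) \<partial>M)
           \<le> ennreal (\<sigma>\<^sup>2 * (\<delta>\<^sup>2 * T))"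
proof -
  obtain Z Z' where Z: "wiener_integral M W (\<lambda>r. k (s - r)) s Z"
    and Z': "wiener_integral M W (\<lambda>r. k' (s - r)) s Z'"
    and eq: "AE \<omega> in M. X s \<omega> = X0 + volterra_drift T \<alpha> \<beta> k u X \<omega> s + \<sigma> * Z \<omega>"
    and eq': "AE \<omega> in M. X' s \<omega> = X0 + volterra_drift T \<alpha> \<beta> k' u X' \<omega> s + \<sigma> * Z' \<omega>"
    using volterra_solution_drift_eq[OF T uL sol kc s] volterra_solution_drift_eq[OF T uL sol' k'c s]
    by blast
  have [measurable]: "Z \<in> borel_measurable M" "Z' \<in> borel_measurable M"
    using Z Z' unfolding wiener_integral_def by auto
  have "(\<integral>\<^sup>+\<omega>. ennreal (((X s \<omega> - volterra_drift T \<alpha> \<beta> k u X \<omega> s)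
                         - (X' s \<omega> - volterra_drift T \<alpha> \<beta> k' u X' \<omega> s))\<^sup>2) \<partial>M)
      = (\<integral>\<^sup>+\<omega>. ennreal ((\<sigma> * (Z \<omega> - Z' \<omega>))\<^sup>2) \<partial>M)"
    using eq eq' by (intro nn_integral_cong_AE) (auto simp: algebra_simps)
  also have "\<dots> = ennreal (\<sigma>\<^sup>2) * (\<integral>\<^sup>+\<omega>. ennreal ((Z \<omega> - Z' \<omega>)\<^sup>2) \<partial>M)"
    by (rule nn_integral_square_cmult) measurable
  also have "\<dots> \<le> ennreal (\<sigma>\<^sup>2) * ennreal (\<delta>\<^sup>2 * s)"
    using kd s by (intro mult_left_mono wiener_integral_mean_square_dist_le[OF BM _ Z Z']) auto
  also have "\<dots> \<le> ennreal (\<sigma>\<^sup>2 * (\<delta>\<^sup>2 * T))"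
    using s by (simp add: ennreal_mult[symmetric] mult_left_mono del: ennreal_mult)
  finally show ?thesis .
qed

lemma volterra_solution_stability:
  fixes u X X' :: "real \<Rightarrow> 'a \<Rightarrow> real" and k k' :: "real \<Rightarrow> real"
  assumes BM: "std_brownian_motion M W" and T: "0 < T" and \<alpha>: "0 \<le> \<alpha>" and \<beta>: "0 \<le> \<beta>"
    and uL: "u \<in> L2a M W T"
    and sol: "volterra_solution M W T X0 \<alpha> \<beta> \<sigma> k u X"
    and sol': "volterra_solution M W T X0 \<alpha> \<beta> \<sigma> k' u X'"
    and kc: "continuous_on {0..T} k" and k'c: "continuous_on {0..T} k'"
    and kb: "\<And>x. x \<in> {0..T} \<Longrightarrow> \<bar>k x\<bar> \<le> B" and k'b: "\<And>x. x \<in> {0..T} \<Longrightarrow> \<bar>k' x\<bar> \<le> B"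
    and kd: "\<And>x. x \<in> {0..T} \<Longrightarrow> \<bar>k x - k' x\<bar> \<le> \<delta>"
    and XB: "\<And>s. s \<in> {0..T} \<Longrightarrow> (\<integral>\<^sup>+\<omega>. ennreal ((X s \<omega>)\<^sup>2) \<partial>M) \<le> ennreal CX" and CX: "0 \<le> CX"
    and t: "t \<in> {0..T}"
  shows "(\<integral>\<^sup>+\<omega>. ennreal ((X t \<omega> - X' t \<omega>)\<^sup>2) \<partial>M)
     \<le> ennreal ((2 + 2 * (\<beta> * B * exp (\<beta> * B * T))\<^sup>2 * T\<^sup>2) *
         (4 * (\<delta> * \<alpha>)\<^sup>2 * (T * L2norm_sq M T u) + 4 * (\<delta> * \<beta>)\<^sup>2 * (T * (T * CX)) + 2 * (\<sigma>\<^sup>2 * (\<delta>\<^sup>2 * T))))"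
proof -
  have P: "prob_space M" using BM unfolding std_brownian_motion_def by blast
  have T0: "0 \<le> T" using T by simp
  have B0: "0 \<le> B" and \<delta>0: "0 \<le> \<delta>" using kb[of 0] kd[of 0] T by force+
  have L0: "0 \<le> L2norm_sq M T u" by (rule L2norm_sq_nonneg[OF T0 uL])
  note Xm [measurable] = volterra_solution_measurable_clamp[OF T0 uL sol kc]
  note [measurable] = volterra_solution_measurable_clamp[OF T0 uL sol' k'c]
    volterra_drift_measurable[OF T0 uL sol kc] volterra_drift_measurable[OF T0 uL sol' k'c]
    borel_measurable_path_L1_norm[OF L2a_measurable_clamp[OF T0 uL]] borel_measurable_path_L1_norm[OF Xm]
  define Y where "Y \<omega> s = X (clamp 0 T s) \<omega> - X' (clamp 0 T s) \<omega>" for \<omega> s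
  define R where "R \<omega> s = (X (clamp 0 T s) \<omega> - volterra_drift T \<alpha> \<beta> k u X \<omega> s)
                   - (X' (clamp 0 T s) \<omega> - volterra_drift T \<alpha> \<beta> k' u X' \<omega> s)" for \<omega> s
  define a where "a \<omega> s = (\<delta> * \<alpha>) * path_L1_norm T u \<omega> + (\<delta> * \<beta>) * path_L1_norm T X \<omega> + \<bar>R \<omega> s\<bar>" for \<omega> s
  have Rm [measurable]: "(\<lambda>p. R (fst p) (snd p)) \<in> borel_measurable (M \<Otimes>\<^sub>M lborel)"
    unfolding R_def by measurable
  have mY: "(\<lambda>(\<omega>, s). Y \<omega> s) \<in> borel_measurable (M \<Otimes>\<^sub>M lborel)"
    unfolding Y_def case_prod_beta' by measurable
  have ma: "(\<lambda>(\<omega>, s). a \<omega> s) \<in> borel_measurable (M \<Otimes>\<^sub>M lborel)"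
    unfolding a_def case_prod_beta' by measurable
  have a0: "0 \<le> a \<omega> s" for \<omega> s
    unfolding a_def using \<alpha> \<beta> \<delta>0 by (intro add_nonneg_nonneg mult_nonneg_nonneg path_L1_norm_nonneg) auto
  define A where "A = 4 * (\<delta> * \<alpha>)\<^sup>2 * (T * L2norm_sq M T u) + 4 * (\<delta> * \<beta>)\<^sup>2 * (T * (T * CX)) + 2 * (\<sigma>\<^sup>2 * (\<delta>\<^sup>2 * T))"
  have A0: "0 \<le> A" unfolding A_def using T0 L0 CX by simp
  have bnd: "(\<integral>\<^sup>+\<omega>. ennreal ((a \<omega> s)\<^sup>2) \<partial>M) \<le> ennreal A" if s: "s \<in> {0..T}" for s
  proof -
    have [measurable]: "(\<lambda>\<omega>. R \<omega> s) \<in> borel_measurable M"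
      using measurable_Pair1[OF Rm, of s] by simp
    have "(\<integral>\<^sup>+\<omega>. ennreal ((R \<omega> s)\<^sup>2) \<partial>M) \<le> ennreal (\<sigma>\<^sup>2 * (\<delta>\<^sup>2 * T))"
      using volterra_noise_mean_square_dist_le[OF BM T0 uL sol sol' kc k'c kd s] s by (simp add: R_def)
    then show ?thesis
      unfolding a_def A_def using T0 L0 CX
      by (intro nn_integral_square_combination_le L2a_path_L1_norm_mean_square_le[OF T uL]
          path_L1_norm_mean_square_le_moment_bound[OF prob_space_imp_sigma_finite[OF P] T Xm XB CX]) auto
  qed
  have "AE \<omega> in M. set_integrable lborel {0..T} (Y \<omega>) \<and>
      (\<forall>t\<in>{0..T}. \<bar>Y \<omega> t\<bar> \<le> a \<omega> t + \<beta> * B * (\<integral>s\<in>{0..t}. \<bar>Y \<omega> s\<bar> \<partial>lborel))"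
    using volterra_difference_AE_pathwise_le[OF T \<alpha> \<beta> uL sol sol' kc k'c kb k'b kd]
    unfolding Y_def R_def a_def by (simp add: distrib_left mult.assoc)
  from gronwall_mean_square_le[OF prob_space_imp_sigma_finite[OF P] T0 _ A0 mY ma a0 this bnd t] \<beta> B0
  have "(\<integral>\<^sup>+\<omega>. ennreal ((Y \<omega> t)\<^sup>2) \<partial>M) \<le> ennreal ((2 + 2 * (\<beta> * B * exp (\<beta> * B * T))\<^sup>2 * T\<^sup>2) * A)"
    by simp
  then show ?thesis
    using t unfolding Y_def A_def by simp
qed

lemma volterra_solution_zero_kernel:
  assumes P: "prob_space M"
  shows "volterra_solution M W T X0 \<alpha> \<beta> \<sigma> (\<lambda>_. 0) u (\<lambda>_ _. X0)"
proof -
  interpret prob_space M by (rule P)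
  have "wiener_integral M W (\<lambda>_. 0) t (\<lambda>_. 0)" for t
    unfolding wiener_integral_def by simp
  then show ?thesis
    unfolding volterra_solution_def
    by (auto intro: borel_integrable_atLeastAtMost')
qed

lemma volterra_solution_mean_square_bound:
  fixes k :: "real \<Rightarrow> real"
  assumes BM: "std_brownian_motion M W" and T: "0 < T" and \<alpha>: "0 \<le> \<alpha>" and \<beta>: "0 \<le> \<beta>"
    and kc: "continuous_on {0..T} k" and kb: "\<And>x. x \<in> {0..T} \<Longrightarrow> \<bar>k x\<bar> \<le> B"
  shows "\<exists>c0 c1. 0 \<le> c0 \<and> 0 \<le> c1 \<and> (\<forall>u X. u \<in> L2a M W T \<longrightarrow> volterra_solution M W T X0 \<alpha> \<beta> \<sigma> k u X \<longrightarrow>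
           (\<forall>t\<in>{0..T}. (\<integral>\<^sup>+\<omega>. ennreal ((X t \<omega>)\<^sup>2) \<partial>M) \<le> ennreal (c0 + c1 * L2norm_sq M T u)))"
proof -
  have P: "prob_space M" using BM unfolding std_brownian_motion_def by blast
  interpret prob_space M by (rule P)
  have T0: "0 \<le> T" using T by simp
  have B0: "0 \<le> B" using kb[of 0] T by force
  define G where "G = 2 + 2 * (\<beta> * B * exp (\<beta> * B * T))\<^sup>2 * T\<^sup>2"
  define c0 where "c0 = 2 * X0\<^sup>2 + 2 * G * (4 * (B * \<beta>)\<^sup>2 * (T * (T * X0\<^sup>2)) + 2 * (\<sigma>\<^sup>2 * (B\<^sup>2 * T)))"
  define c1 where "c1 = 8 * G * (B * \<alpha>)\<^sup>2 * T"
  have G0: "0 \<le> G" unfolding G_def by simp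
  show ?thesis
  proof (intro exI conjI allI impI ballI)
    show "0 \<le> c0" "0 \<le> c1" unfolding c0_def c1_def using G0 T by auto
    fix u X t
    assume uL: "u \<in> L2a M W T" and sol: "volterra_solution M W T X0 \<alpha> \<beta> \<sigma> k u X" and t: "t \<in> {0..T}"
    text \<open>Compare \<open>X\<close> with the constant solution \<open>X0\<close> of the equation with kernel \<open>0\<close>,
      which is \<open>B\<close>-close to \<open>k\<close>.\<close>
    have "(\<integral>\<^sup>+\<omega>. ennreal ((X0 - X t \<omega>)\<^sup>2) \<partial>M)
        \<le> ennreal (G * (4 * (B * \<alpha>)\<^sup>2 * (T * L2norm_sq M T u) + 4 * (B * \<beta>)\<^sup>2 * (T * (T * X0\<^sup>2))
                       + 2 * (\<sigma>\<^sup>2 * (B\<^sup>2 * T))))"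
      unfolding G_def
      by (rule volterra_solution_stability[OF BM T \<alpha> \<beta> uL volterra_solution_zero_kernel[OF P] sol
            continuous_on_const kc _ kb _ _ _ t]) (use B0 kb in \<open>auto simp: emeasure_space_1\<close>)
    moreover have "(\<integral>\<^sup>+\<omega>. ennreal ((X t \<omega>)\<^sup>2) \<partial>M)
        \<le> 2 * (\<integral>\<^sup>+\<omega>. ennreal (X0\<^sup>2) \<partial>M) + 2 * (\<integral>\<^sup>+\<omega>. ennreal ((X t \<omega> - X0)\<^sup>2) \<partial>M)"
    proof -
      have "X t \<in> borel_measurable M"
        using measurable_Pair1[OF volterra_solution_measurable_clamp[OF T0 uL sol kc], of t] t by simp
      then show ?thesis using nn_integral_square_add_le[of "\<lambda>_. X0" M "\<lambda>\<omega>. X t \<omega> - X0"] by simp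
    qed
    ultimately have "(\<integral>\<^sup>+\<omega>. ennreal ((X t \<omega>)\<^sup>2) \<partial>M)
        \<le> 2 * ennreal (X0\<^sup>2) + 2 * ennreal (G * (4 * (B * \<alpha>)\<^sup>2 * (T * L2norm_sq M T u)
            + 4 * (B * \<beta>)\<^sup>2 * (T * (T * X0\<^sup>2)) + 2 * (\<sigma>\<^sup>2 * (B\<^sup>2 * T))))"
      by (simp add: emeasure_space_1 power2_commute order_trans add_left_mono mult_left_mono)
    also have "\<dots> = ennreal (c0 + c1 * L2norm_sq M T u)"
      unfolding c0_def c1_def using G0 T L2norm_sq_nonneg[OF T0 uL]
      by (simp add: ennreal_mult ennreal_plus algebra_simps power_mult_distrib)
    finally show "(\<integral>\<^sup>+\<omega>. ennreal ((X t \<omega>)\<^sup>2) \<partial>M) \<le> ennreal (c0 + c1 * L2norm_sq M T u)" .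
  qed
qed

lemma volterra_kernel_approximation_rate:
  fixes k :: "real \<Rightarrow> real" and kn :: "nat \<Rightarrow> real \<Rightarrow> real" and r :: "nat \<Rightarrow> real"
  assumes BM: "std_brownian_motion M W" and T: "0 < T" and \<alpha>: "0 \<le> \<alpha>" and \<beta>: "0 \<le> \<beta>"
    and kc: "continuous_on {0..T} k" and kb: "\<And>x. x \<in> {0..T} \<Longrightarrow> \<bar>k x\<bar> \<le> B"
    and knc: "\<And>n. continuous_on {0..T} (kn n)" and knb: "\<And>n x. x \<in> {0..T} \<Longrightarrow> \<bar>kn n x\<bar> \<le> B"
    and err: "\<And>n x. 1 \<le> n \<Longrightarrow> x \<in> {0..T} \<Longrightarrow> \<bar>k x - kn n x\<bar> \<le> c * r n"
  shows "\<exists>C>0. \<forall>n::nat. n \<ge> 1 \<longrightarrow> (\<forall>u \<in> L2a M W T. \<forall>X Xn.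
           volterra_solution M W T X0 \<alpha> \<beta> \<sigma> k u X \<longrightarrow>
           volterra_solution M W T X0 \<alpha> \<beta> \<sigma> (kn n) u Xn \<longrightarrow>
           (\<forall>t\<in>{0..T}. (\<integral>\<^sup>+\<omega>. ennreal ((X t \<omega> - Xn t \<omega>)\<^sup>2) \<partial>M)
              \<le> ennreal (C * (1 + L2norm_sq M T u) * (r n)\<^sup>2)))"
proof -
  obtain c0 c1 where c0: "0 \<le> c0" and c1: "0 \<le> c1"
    and XB: "\<And>u X t. u \<in> L2a M W T \<Longrightarrow> volterra_solution M W T X0 \<alpha> \<beta> \<sigma> k u X \<Longrightarrow> t \<in> {0..T} \<Longrightarrow>
               (\<integral>\<^sup>+\<omega>. ennreal ((X t \<omega>)\<^sup>2) \<partial>M) \<le> ennreal (c0 + c1 * L2norm_sq M T u)"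
    using volterra_solution_mean_square_bound[OF BM T \<alpha> \<beta> kc kb, of X0 \<sigma>] by blast
  define G where "G = 2 + 2 * (\<beta> * B * exp (\<beta> * B * T))\<^sup>2 * T\<^sup>2"
  define a where "a = 4 * \<beta>\<^sup>2 * T\<^sup>2 * c0 + 2 * \<sigma>\<^sup>2 * T"
  define b where "b = 4 * \<alpha>\<^sup>2 * T + 4 * \<beta>\<^sup>2 * T\<^sup>2 * c1"
  define P where "P = G * (a + b)"
  have G0: "0 \<le> G" and a0: "0 \<le> a" and b0: "0 \<le> b"
    unfolding G_def a_def b_def using T c0 c1 by auto
  then have P0: "0 \<le> P" unfolding P_def by simp
  show ?thesis
  proof (intro exI[of _ "(P + 1) * (c\<^sup>2 + 1)"] conjI allI impI ballI)
    show "0 < (P + 1) * (c\<^sup>2 + 1)" using P0 by (simp add: add_nonneg_pos)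
    fix n :: nat and u X Xn t
    assume n: "1 \<le> n" and uL: "u \<in> L2a M W T" and sol: "volterra_solution M W T X0 \<alpha> \<beta> \<sigma> k u X"
      and soln: "volterra_solution M W T X0 \<alpha> \<beta> \<sigma> (kn n) u Xn" and t: "t \<in> {0..T}"
    define \<delta> where "\<delta> = c * r n"
    define L where "L = L2norm_sq M T u"
    have L0: "0 \<le> L" unfolding L_def using T uL by (intro L2norm_sq_nonneg) auto
    have "(\<integral>\<^sup>+\<omega>. ennreal ((X t \<omega> - Xn t \<omega>)\<^sup>2) \<partial>M)
        \<le> ennreal (G * (4 * (\<delta> * \<alpha>)\<^sup>2 * (T * L) + 4 * (\<delta> * \<beta>)\<^sup>2 * (T * (T * (c0 + c1 * L)))
                       + 2 * (\<sigma>\<^sup>2 * (\<delta>\<^sup>2 * T))))"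
      unfolding G_def L_def \<delta>_def
      by (rule volterra_solution_stability[OF BM T \<alpha> \<beta> uL sol soln kc knc kb knb err[OF n] XB[OF uL sol] _ t])
        (use c0 c1 L0 in \<open>auto simp: L_def\<close>)
    also have "G * (4 * (\<delta> * \<alpha>)\<^sup>2 * (T * L) + 4 * (\<delta> * \<beta>)\<^sup>2 * (T * (T * (c0 + c1 * L)))
                  + 2 * (\<sigma>\<^sup>2 * (\<delta>\<^sup>2 * T))) = c\<^sup>2 * (r n)\<^sup>2 * G * (a + b * L)"
      unfolding a_def b_def \<delta>_def by (simp add: power_mult_distrib power2_eq_square algebra_simps)
    also have "\<dots> \<le> c\<^sup>2 * (r n)\<^sup>2 * G * ((a + b) * (1 + L))"
      using a0 b0 L0 G0 by (intro mult_left_mono) (auto simp: algebra_simps)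
    also have "\<dots> = (c\<^sup>2 * P) * ((1 + L) * (r n)\<^sup>2)"
      unfolding P_def by (simp add: algebra_simps)
    also have "\<dots> \<le> ((P + 1) * (c\<^sup>2 + 1)) * ((1 + L) * (r n)\<^sup>2)"
      using P0 L0 by (intro mult_right_mono) (auto simp: algebra_simps)
    finally show "(\<integral>\<^sup>+\<omega>. ennreal ((X t \<omega> - Xn t \<omega>)\<^sup>2) \<partial>M)
        \<le> ennreal ((P + 1) * (c\<^sup>2 + 1) * (1 + L2norm_sq M T u) * (r n)\<^sup>2)"
      unfolding L_def by (simp add: ennreal_leI order_trans mult.assoc)
  qed
qed

theorem theorem3p1:
  fixes M :: "'a measure" and W :: "real \<Rightarrow> 'a \<Rightarrow> real"
    and T \<alpha> \<beta> \<sigma> X0 h :: real and K :: "real \<Rightarrow> real"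
  assumes BM: "std_brownian_motion M W"
    and T: "T > 0" and \<alpha>: "\<alpha> > 0" and \<beta>: "\<beta> > 0" and \<sigma>: "\<sigma> > 0"
    and h: "0 < h" "h < 1"
    and K: "holder_on h {0..T} K"
  shows "\<exists>C>0. \<forall>n::nat. n \<ge> 1 \<longrightarrow> (\<forall>u \<in> L2a M W T. \<forall>X Xn.
           volterra_solution M W T X0 \<alpha> \<beta> \<sigma> K u X \<longrightarrow>
           volterra_solution M W T X0 \<alpha> \<beta> \<sigma> (bernstein T K n) u Xn \<longrightarrow>
           (\<forall>t\<in>{0..T}. (\<integral>\<^sup>+\<omega>. ennreal ((X t \<omega> - Xn t \<omega>)\<^sup>2) \<partial>M)
              \<le> ennreal (C * (1 + L2norm_sq M T u) * real n powr (- h))))"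
proof -
  have Kc: "continuous_on {0..T} K" by (rule holder_on_imp_continuous_on[OF h(1) K])
  then obtain B where Kb: "\<And>x. x \<in> {0..T} \<Longrightarrow> \<bar>K x\<bar> \<le> B"
    using compact_imp_bounded[OF compact_continuous_image[OF Kc compact_Icc]] by (force simp: bounded_iff)
  obtain L where L: "\<And>x y. x \<in> {0..T} \<Longrightarrow> y \<in> {0..T} \<Longrightarrow> \<bar>K x - K y\<bar> \<le> L * \<bar>x - y\<bar> powr h"
    using K unfolding holder_on_def by blast
  have err: "\<And>n x. 1 \<le> n \<Longrightarrow> x \<in> {0..T} \<Longrightarrow>
      \<bar>K x - bernstein T K n x\<bar> \<le> (2 * \<bar>L\<bar> * T powr h) * real n powr (- h / 2)"
    using bernstein_holder_error[OF T h(1) _ _ L] h by simp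
  have rate: "(real n powr (- h / 2))\<^sup>2 = real n powr (- h)" for n :: nat
    by (simp add: power2_eq_square powr_add[symmetric])
  from volterra_kernel_approximation_rate[OF BM T less_imp_le[OF \<alpha>] less_imp_le[OF \<beta>] Kc Kb
      continuous_on_bernstein bernstein_abs_le[where K = K, OF T Kb] err]
  show ?thesis unfolding rate .
qed

end
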